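(* Let $R$ be a pro-ring (object of $\operatorname{Pro}(\mathbf{Rng})$), let $K$ be a unital commutative ring (viewed as a constant pro-set), and suppose the unital commutative ring object $K$ acts on the ring object $R$ in $\operatorname{Pro}(\mathbf{Set})$, i.e. there is a morphism $K\times R\to R$, $(k,a)\mapsto ka$, in $\operatorname{Pro}(\mathbf{Set})$ which is biadditive and satisfies $(kk')a=k(k'a)$, $1a=a$, $k(ab)=(ka)b=a(kb)$ as equalities of morphisms in $\operatorname{Pro}(\mathbf{Set})$. Then $R$ is isomorphic in $\operatorname{Pro}(\mathbf{Rng})$ to a pro-$K$-algebra, i.e. a formal projective limit of an inverse system of (non-unital) $K$-algebras with $K$-linear transition maps, compatibly with the given action.
   Context: For a category $\mathcal C$, $\operatorname{Pro}(\mathcal C)$ is its pro-completion: objects are inverse systems, i.e. functors $X\colon \mathcal I_X^{op}\to\mathcal C$ with $\mathcal I_X$ a small filtered category, and $\operatorname{Hom}_{\operatorname{Pro}(\mathcal C)}(X,Y)=\varprojlim_{j\in\mathcal I_Y}\varinjlim_{i\in\mathcal I_X}\mathcal C(X_i,Y_j)$. $\mathbf{Rng}$ denotes non-unital associative rings; the canonical functor $\operatorname{Pro}(\mathbf{Rng})\to\mathrm{Rng}(\operatorname{Pro}(\mathbf{Set}))$ uses levelwise operations. *)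

theory Defs
  imports Main
begin

record ('o, 'm) cat =
  Ob  :: "'o set"
  Ar  :: "'m set"
  Dom :: "'m \<Rightarrow> 'o"
  Cod :: "'m \<Rightarrow> 'o"
  Cmp :: "'m \<Rightarrow> 'm \<Rightarrow> 'm"   (* Cmp C g f = g o f *)
  Idn :: "'o \<Rightarrow> 'm"

definition hom :: "('o, 'm) cat \<Rightarrow> 'o \<Rightarrow> 'o \<Rightarrow> 'm set" where
  "hom C a b = {u \<in> Ar C. Dom C u = a \<and> Cod C u = b}"

definition category :: "('o, 'm) cat \<Rightarrow> bool" where
  "category C \<longleftrightarrow>
     (\<forall>u\<in>Ar C. Dom C u \<in> Ob C \<and> Cod C u \<in> Ob C) \<and>
     (\<forall>a\<in>Ob C. Idn C a \<in> hom C a a) \<and>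
     (\<forall>f\<in>Ar C. \<forall>g\<in>Ar C. Cod C f = Dom C g \<longrightarrow> Cmp C g f \<in> hom C (Dom C f) (Cod C g)) \<and>
     (\<forall>f\<in>Ar C. Cmp C (Idn C (Cod C f)) f = f \<and> Cmp C f (Idn C (Dom C f)) = f) \<and>
     (\<forall>f\<in>Ar C. \<forall>g\<in>Ar C. \<forall>h\<in>Ar C. Cod C f = Dom C g \<and> Cod C g = Dom C h \<longrightarrow>
         Cmp C h (Cmp C g f) = Cmp C (Cmp C h g) f)"

text \<open>Filtered category (the index categories of pro-objects are \<open>I\<close>, functors go out of \<open>I^op\<close>).\<close>
definition filtered :: "('o, 'm) cat \<Rightarrow> bool" where
  "filtered C \<longleftrightarrow> category C \<and> Ob C \<noteq> {} \<and>
     (\<forall>a\<in>Ob C. \<forall>b\<in>Ob C. \<exists>c u v. u \<in> hom C a c \<and> v \<in> hom C b c) \<and>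
     (\<forall>a b u v. u \<in> hom C a b \<and> v \<in> hom C a b \<longrightarrow>
         (\<exists>c w. w \<in> hom C b c \<and> Cmp C w u = Cmp C w v))"

section \<open>Pro-sets: functors I^op \<rightarrow> Set with I small filtered\<close>

record ('o, 'm, 'x) pro =
  Ix :: "('o, 'm) cat"
  Lv :: "'o \<Rightarrow> 'x set"
  Tr :: "'m \<Rightarrow> 'x \<Rightarrow> 'x"   (* for u : a \<rightarrow> b, Tr u : Lv b \<rightarrow> Lv a *)

definition proset :: "('o, 'm, 'x) pro \<Rightarrow> bool" where
  "proset P \<longleftrightarrow> filtered (Ix P) \<and>
     (\<forall>u\<in>Ar (Ix P). \<forall>x\<in>Lv P (Cod (Ix P) u). Tr P u x \<in> Lv P (Dom (Ix P) u)) \<and>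
     (\<forall>a\<in>Ob (Ix P). \<forall>x\<in>Lv P a. Tr P (Idn (Ix P) a) x = x) \<and>
     (\<forall>f\<in>Ar (Ix P). \<forall>g\<in>Ar (Ix P). Cod (Ix P) f = Dom (Ix P) g \<longrightarrow>
         (\<forall>x\<in>Lv P (Cod (Ix P) g). Tr P (Cmp (Ix P) g f) x = Tr P f (Tr P g x)))"

text \<open>Equality in the filtered colimit \<open>colim_i C(X_i, Y_j)\<close> of two representatives
  \<open>(i, f)\<close> and \<open>(i', f')\<close>.\<close>
definition germ_eq :: "('o, 'm, 'x) pro \<Rightarrow> 'o \<Rightarrow> ('x \<Rightarrow> 'y) \<Rightarrow> 'o \<Rightarrow> ('x \<Rightarrow> 'y) \<Rightarrow> bool" where
  "germ_eq P i f i' f' \<longleftrightarrow>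
     (\<exists>k u u'. u \<in> hom (Ix P) i k \<and> u' \<in> hom (Ix P) i' k \<and>
        (\<forall>x\<in>Lv P k. f (Tr P u x) = f' (Tr P u' x)))"

text \<open>A morphism \<open>P \<rightarrow> Q\<close> in Pro(Set), given by a representative: for each index \<open>j\<close> of \<open>Q\<close>
  an index \<open>fst F j\<close> of \<open>P\<close> and a map \<open>snd F j : P_(fst F j) \<rightarrow> Q_j\<close>, compatible in
  \<open>lim_j colim_i Set(P_i, Q_j)\<close>.\<close>
type_synonym ('q, 'o, 'x, 'y) promap = "('q \<Rightarrow> 'o) \<times> ('q \<Rightarrow> 'x \<Rightarrow> 'y)"

definition promor :: "('o, 'm, 'x) pro \<Rightarrow> ('q, 'n, 'y) pro \<Rightarrow> ('q, 'o, 'x, 'y) promap \<Rightarrow> bool" where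
  "promor P Q F \<longleftrightarrow>
     (\<forall>j\<in>Ob (Ix Q). fst F j \<in> Ob (Ix P) \<and> (\<forall>x\<in>Lv P (fst F j). snd F j x \<in> Lv Q j)) \<and>
     (\<forall>v\<in>Ar (Ix Q). germ_eq P (fst F (Cod (Ix Q) v)) (\<lambda>x. Tr Q v (snd F (Cod (Ix Q) v) x))
                               (fst F (Dom (Ix Q) v)) (snd F (Dom (Ix Q) v)))"

definition promor_eq :: "('o, 'm, 'x) pro \<Rightarrow> ('q, 'n, 'y) pro \<Rightarrow>
    ('q, 'o, 'x, 'y) promap \<Rightarrow> ('q, 'o, 'x, 'y) promap \<Rightarrow> bool" where
  "promor_eq P Q F G \<longleftrightarrow> (\<forall>j\<in>Ob (Ix Q). germ_eq P (fst F j) (snd F j) (fst G j) (snd G j))"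

definition pcomp :: "('l, 'q, 'y, 'z) promap \<Rightarrow> ('q, 'o, 'x, 'y) promap \<Rightarrow> ('l, 'o, 'x, 'z) promap" where
  "pcomp G F = (\<lambda>l. fst F (fst G l), \<lambda>l x. snd G l (snd F (fst G l) x))"

definition pid :: "('o, 'o, 'x, 'x) promap" where
  "pid = (\<lambda>j. j, \<lambda>j x. x)"

definition lw :: "('o \<Rightarrow> 'x \<Rightarrow> 'y) \<Rightarrow> ('o, 'o, 'x, 'y) promap" where
  "lw f = (\<lambda>j. j, f)"

definition prod_cat :: "('o, 'm) cat \<Rightarrow> ('p, 'n) cat \<Rightarrow> ('o \<times> 'p, 'm \<times> 'n) cat" where
  "prod_cat C D = \<lparr> Ob = Ob C \<times> Ob D, Ar = Ar C \<times> Ar D,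
     Dom = (\<lambda>(u, v). (Dom C u, Dom D v)), Cod = (\<lambda>(u, v). (Cod C u, Cod D v)),
     Cmp = (\<lambda>(g, g') (f, f'). (Cmp C g f, Cmp D g' f')),
     Idn = (\<lambda>(a, b). (Idn C a, Idn D b)) \<rparr>"

definition pprod :: "('o, 'm, 'x) pro \<Rightarrow> ('p, 'n, 'y) pro \<Rightarrow> ('o \<times> 'p, 'm \<times> 'n, 'x \<times> 'y) pro" where
  "pprod P Q = \<lparr> Ix = prod_cat (Ix P) (Ix Q), Lv = (\<lambda>(a, b). Lv P a \<times> Lv Q b),
     Tr = (\<lambda>(u, v) (x, y). (Tr P u x, Tr Q v y)) \<rparr>"

definition cprod :: "'c set \<Rightarrow> ('o, 'm, 'x) pro \<Rightarrow> ('o, 'm, 'c \<times> 'x) pro" where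
  "cprod A P = \<lparr> Ix = Ix P, Lv = (\<lambda>a. A \<times> Lv P a), Tr = (\<lambda>u (c, x). (c, Tr P u x)) \<rparr>"

definition ctimes :: "('q, 'o, 'x, 'y) promap \<Rightarrow> ('q, 'o, 'c \<times> 'x, 'c \<times> 'y) promap" where
  "ctimes F = (fst F, \<lambda>j (c, x). (c, snd F j x))"

definition ptimes :: "('q, 'o, 'x, 'y) promap \<Rightarrow> ('r, 'p, 'z, 'w) promap \<Rightarrow>
    ('q \<times> 'r, 'o \<times> 'p, 'x \<times> 'z, 'y \<times> 'w) promap" where
  "ptimes F G = (\<lambda>(j1, j2). (fst F j1, fst G j2), \<lambda>(j1, j2) (x, y). (snd F j1 x, snd G j2 y))"

definition ub :: "('o, 'm) cat \<Rightarrow> 'o \<Rightarrow> 'o \<Rightarrow> 'o \<times> 'm \<times> 'm" where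
  "ub C a b = (SOME (c, u, v). u \<in> hom C a c \<and> v \<in> hom C b c)"

definition diag :: "('o, 'm, 'x) pro \<Rightarrow> ('o \<times> 'o, 'o, 'x, 'x \<times> 'x) promap" where
  "diag P = (\<lambda>(j1, j2). fst (ub (Ix P) j1 j2),
             \<lambda>(j1, j2) x. (Tr P (fst (snd (ub (Ix P) j1 j2))) x, Tr P (snd (snd (ub (Ix P) j1 j2))) x))"

record 'a rng =
  rcar  :: "'a set"
  radd  :: "'a \<Rightarrow> 'a \<Rightarrow> 'a"
  rmul  :: "'a \<Rightarrow> 'a \<Rightarrow> 'a"
  rzero :: "'a"
  rneg  :: "'a \<Rightarrow> 'a"

definition is_rng :: "'a rng \<Rightarrow> bool" where
  "is_rng A \<longleftrightarrow>
     rzero A \<in> rcar A \<and>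
     (\<forall>x\<in>rcar A. \<forall>y\<in>rcar A. radd A x y \<in> rcar A \<and> rmul A x y \<in> rcar A) \<and>
     (\<forall>x\<in>rcar A. rneg A x \<in> rcar A) \<and>
     (\<forall>x\<in>rcar A. \<forall>y\<in>rcar A. \<forall>z\<in>rcar A.
        radd A (radd A x y) z = radd A x (radd A y z) \<and>
        rmul A (rmul A x y) z = rmul A x (rmul A y z) \<and>
        rmul A x (radd A y z) = radd A (rmul A x y) (rmul A x z) \<and>
        rmul A (radd A x y) z = radd A (rmul A x z) (rmul A y z)) \<and>
     (\<forall>x\<in>rcar A. \<forall>y\<in>rcar A. radd A x y = radd A y x) \<and>
     (\<forall>x\<in>rcar A. radd A (rzero A) x = x \<and> radd A (rneg A x) x = rzero A)"

definition rng_hom :: "'a rng \<Rightarrow> 'b rng \<Rightarrow> ('a \<Rightarrow> 'b) \<Rightarrow> bool" where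
  "rng_hom A B f \<longleftrightarrow>
     (\<forall>x\<in>rcar A. f x \<in> rcar B) \<and>
     (\<forall>x\<in>rcar A. \<forall>y\<in>rcar A. f (radd A x y) = radd B (f x) (f y) \<and> f (rmul A x y) = rmul B (f x) (f y))"

record ('o, 'm, 'r) prorng =
  PIx :: "('o, 'm) cat"
  PRg :: "'o \<Rightarrow> 'r rng"
  PTr :: "'m \<Rightarrow> 'r \<Rightarrow> 'r"

definition und :: "('o, 'm, 'r) prorng \<Rightarrow> ('o, 'm, 'r) pro" where
  "und R = \<lparr> Ix = PIx R, Lv = (\<lambda>i. rcar (PRg R i)), Tr = PTr R \<rparr>"

definition is_prorng :: "('o, 'm, 'r) prorng \<Rightarrow> bool" where
  "is_prorng R \<longleftrightarrow> proset (und R) \<and>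
     (\<forall>i\<in>Ob (PIx R). is_rng (PRg R i)) \<and>
     (\<forall>u\<in>Ar (PIx R). rng_hom (PRg R (Cod (PIx R) u)) (PRg R (Dom (PIx R) u)) (PTr R u))"

definition prorng_mor :: "('o, 'm, 'r) prorng \<Rightarrow> ('q, 'n, 's) prorng \<Rightarrow> ('q, 'o, 'r, 's) promap \<Rightarrow> bool" where
  "prorng_mor R S F \<longleftrightarrow> promor (und R) (und S) F \<and>
     (\<forall>j\<in>Ob (PIx S). rng_hom (PRg R (fst F j)) (PRg S j) (snd F j))"

definition padd :: "('o, 'm, 'r) prorng \<Rightarrow> ('o, 'o \<times> 'o, 'r \<times> 'r, 'r) promap" where
  "padd R = (\<lambda>j. (j, j), \<lambda>j (a, b). radd (PRg R j) a b)"

definition pmul :: "('o, 'm, 'r) prorng \<Rightarrow> ('o, 'o \<times> 'o, 'r \<times> 'r, 'r) promap" where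
  "pmul R = (\<lambda>j. (j, j), \<lambda>j (a, b). rmul (PRg R j) a b)"

definition is_kalg :: "'s rng \<Rightarrow> ('k::comm_ring_1 \<Rightarrow> 's \<Rightarrow> 's) \<Rightarrow> bool" where
  "is_kalg A sm \<longleftrightarrow> is_rng A \<and>
     (\<forall>k. \<forall>a\<in>rcar A. sm k a \<in> rcar A) \<and>
     (\<forall>k k'. \<forall>a\<in>rcar A. \<forall>b\<in>rcar A.
        sm k (radd A a b) = radd A (sm k a) (sm k b) \<and>
        sm (k + k') a = radd A (sm k a) (sm k' a) \<and>
        sm (k * k') a = sm k (sm k' a) \<and>
        sm 1 a = a \<and>
        sm k (rmul A a b) = rmul A (sm k a) b \<and>
        sm k (rmul A a b) = rmul A a (sm k b))"

definition is_prokalg :: "('o, 'm, 's) prorng \<Rightarrow> ('o \<Rightarrow> 'k::comm_ring_1 \<Rightarrow> 's \<Rightarrow> 's) \<Rightarrow> bool" where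
  "is_prokalg S sm \<longleftrightarrow> is_prorng S \<and>
     (\<forall>j\<in>Ob (PIx S). is_kalg (PRg S j) (sm j)) \<and>
     (\<forall>u\<in>Ar (PIx S). \<forall>k. \<forall>x\<in>rcar (PRg S (Cod (PIx S) u)).
        PTr S u (sm (Cod (PIx S) u) k x) = sm (Dom (PIx S) u) k (PTr S u x))"

text \<open>A large "universe" type used for the index category and elements of the pro-K-algebra
  in the conclusion (HOL cannot quantify existentially over types).\<close>
type_synonym ('o, 'm, 'k, 'r) univ = "('o + 'm + 'k + 'r) list set"

end

theory Submission
  imports Defs
begin

text \<open>The action is only given by representatives \<open>act j : K \<times> R\<^bsub>aix j\<^esub> \<rightarrow> R\<^bsub>j\<^esub>\<close> whose axioms
  hold after passing to a further index. Call \<open>(j, l, t)\<close> with \<open>t : aix j \<rightarrow> l\<close> good if the twisted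
  action \<open>\<phi>\<^sub>k = act j k \<circ> t : R\<^sub>l \<rightarrow> R\<^sub>j\<close> satisfies the axioms on the nose and \<open>\<phi>\<^sub>1\<close> is a
  transition map; by filteredness every \<open>t\<close> can be refined to a good one. Good triples and the
  compatible pairs of maps between them form a filtered category. Over \<open>(j, l, t)\<close> take the
  \<open>K\<close>-algebra of functions \<open>K \<rightarrow> R\<^sub>j\<close> generated by the orbits \<open>k \<mapsto> \<phi>\<^sub>k y\<close>: sending \<open>y\<close> to its
  orbit and evaluating at \<open>1\<close> are mutually inverse morphisms of pro-rings, the first one \<open>K\<close>-linear.\<close>

section \<open>Non-unital rings\<close>

lemma
  assumes "is_rng A"
  shows rng_zero: "rzero A \<in> rcar A"
  and rng_addc: "x \<in> rcar A \<Longrightarrow> y \<in> rcar A \<Longrightarrow> radd A x y \<in> rcar A"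
  and rng_mulc: "x \<in> rcar A \<Longrightarrow> y \<in> rcar A \<Longrightarrow> rmul A x y \<in> rcar A"
  and rng_negc: "x \<in> rcar A \<Longrightarrow> rneg A x \<in> rcar A"
  and rng_add_assoc: "x \<in> rcar A \<Longrightarrow> y \<in> rcar A \<Longrightarrow> z \<in> rcar A \<Longrightarrow> radd A (radd A x y) z = radd A x (radd A y z)"
  and rng_mul_assoc: "x \<in> rcar A \<Longrightarrow> y \<in> rcar A \<Longrightarrow> z \<in> rcar A \<Longrightarrow> rmul A (rmul A x y) z = rmul A x (rmul A y z)"
  and rng_distl: "x \<in> rcar A \<Longrightarrow> y \<in> rcar A \<Longrightarrow> z \<in> rcar A \<Longrightarrow> rmul A x (radd A y z) = radd A (rmul A x y) (rmul A x z)"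
  and rng_distr: "x \<in> rcar A \<Longrightarrow> y \<in> rcar A \<Longrightarrow> z \<in> rcar A \<Longrightarrow> rmul A (radd A x y) z = radd A (rmul A x z) (rmul A y z)"
  and rng_add_comm: "x \<in> rcar A \<Longrightarrow> y \<in> rcar A \<Longrightarrow> radd A x y = radd A y x"
  and rng_add0l: "x \<in> rcar A \<Longrightarrow> radd A (rzero A) x = x"
  and rng_negl: "x \<in> rcar A \<Longrightarrow> radd A (rneg A x) x = rzero A"
  using assms unfolding is_rng_def by auto

context
  fixes A :: "'a rng"
  assumes A: "is_rng A"
begin

lemma rng_add0r: "x \<in> rcar A \<Longrightarrow> radd A x (rzero A) = x"
  using rng_add_comm[OF A] rng_add0l[OF A] rng_zero[OF A] by metis

lemma rng_negr: "x \<in> rcar A \<Longrightarrow> radd A x (rneg A x) = rzero A"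
  using rng_add_comm[OF A] rng_negl[OF A] rng_negc[OF A] by metis

lemma rng_add_left_cancel:
  assumes "x \<in> rcar A" "y \<in> rcar A" "z \<in> rcar A" "radd A x y = radd A x z"
  shows "y = z"
proof -
  have "y = radd A (radd A (rneg A x) x) y" using assms rng_negl[OF A] rng_add0l[OF A] by simp
  also have "\<dots> = radd A (rneg A x) (radd A x y)" using assms rng_add_assoc[OF A] rng_negc[OF A] by simp
  also have "\<dots> = radd A (radd A (rneg A x) x) z" using assms rng_add_assoc[OF A] rng_negc[OF A] by simp
  also have "\<dots> = z" using assms rng_negl[OF A] rng_add0l[OF A] by simp
  finally show ?thesis .
qed

lemma rng_neg_unique:
  assumes "x \<in> rcar A" "y \<in> rcar A" "radd A x y = rzero A"
  shows "y = rneg A x"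
  using rng_add_left_cancel[OF assms(1) assms(2) rng_negc[OF A assms(1)]] assms rng_negr by simp

lemma rng_mul0l: assumes "x \<in> rcar A" shows "rmul A (rzero A) x = rzero A"
proof -
  have z: "rzero A \<in> rcar A" using rng_zero[OF A] .
  have m: "rmul A (rzero A) x \<in> rcar A" using rng_mulc[OF A z assms] .
  have "radd A (rmul A (rzero A) x) (rmul A (rzero A) x) = radd A (rmul A (rzero A) x) (rzero A)"
    using rng_distr[OF A z z assms, symmetric] rng_add0l[OF A z] rng_add0r m by simp
  then show ?thesis using rng_add_left_cancel[OF m m z] by simp
qed

lemma rng_mul0r: assumes "x \<in> rcar A" shows "rmul A x (rzero A) = rzero A"
proof -
  have z: "rzero A \<in> rcar A" using rng_zero[OF A] .
  have m: "rmul A x (rzero A) \<in> rcar A" using rng_mulc[OF A assms z] .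
  have "radd A (rmul A x (rzero A)) (rmul A x (rzero A)) = radd A (rmul A x (rzero A)) (rzero A)"
    using rng_distl[OF A assms z z, symmetric] rng_add0l[OF A z] rng_add0r m by simp
  then show ?thesis using rng_add_left_cancel[OF m m z] by simp
qed

lemma rng_neg_mul_left:
  assumes "x \<in> rcar A" "y \<in> rcar A"
  shows "rmul A (rneg A x) y = rneg A (rmul A x y)"
proof -
  have "radd A (rmul A x y) (rmul A (rneg A x) y) = rmul A (radd A x (rneg A x)) y"
    using rng_distr[OF A assms(1) rng_negc[OF A assms(1)] assms(2)] by simp
  also have "\<dots> = rzero A" using rng_negr[OF assms(1)] rng_mul0l[OF assms(2)] by simp
  finally show ?thesis using rng_neg_unique rng_mulc[OF A] rng_negc[OF A] assms by simp
qed

lemma rng_neg_mul_right: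
  assumes "x \<in> rcar A" "y \<in> rcar A"
  shows "rmul A x (rneg A y) = rneg A (rmul A x y)"
proof -
  have "radd A (rmul A x y) (rmul A x (rneg A y)) = rmul A x (radd A y (rneg A y))"
    using rng_distl[OF A assms(1) assms(2) rng_negc[OF A assms(2)]] by simp
  also have "\<dots> = rzero A" using rng_negr[OF assms(2)] rng_mul0r[OF assms(1)] by simp
  finally show ?thesis using rng_neg_unique rng_mulc[OF A] rng_negc[OF A] assms by simp
qed

lemma rng_add_swap_middle:
  assumes "x \<in> rcar A" "y \<in> rcar A" "z \<in> rcar A" "w \<in> rcar A"
  shows "radd A (radd A x y) (radd A z w) = radd A (radd A x z) (radd A y w)"
proof -
  have "radd A (radd A x y) (radd A z w) = radd A x (radd A y (radd A z w))"
    using rng_add_assoc[OF A] rng_addc[OF A] assms by simp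
  also have "radd A y (radd A z w) = radd A z (radd A y w)"
    using rng_add_assoc[OF A] rng_add_comm[OF A] assms by (metis rng_addc[OF A])
  finally show ?thesis using rng_add_assoc[OF A] rng_addc[OF A] assms by simp
qed

lemma rng_neg_add:
  assumes "x \<in> rcar A" "y \<in> rcar A"
  shows "rneg A (radd A x y) = radd A (rneg A x) (rneg A y)"
proof -
  have nx: "rneg A x \<in> rcar A" and ny: "rneg A y \<in> rcar A" using rng_negc[OF A] assms by auto
  have "radd A (radd A x y) (radd A (rneg A x) (rneg A y)) = radd A (radd A x (rneg A x)) (radd A y (rneg A y))"
    using rng_add_swap_middle assms nx ny by simp
  also have "\<dots> = rzero A" using rng_negr assms rng_add0l[OF A] rng_zero[OF A] by simp
  finally show ?thesis using rng_neg_unique[of "radd A x y"] rng_addc[OF A] assms nx ny by metis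
qed

end

lemma additive_map_zero:
  assumes A: "is_rng A" and B: "is_rng B" and f: "\<forall>x\<in>rcar A. f x \<in> rcar B"
    and add: "\<forall>x\<in>rcar A. \<forall>y\<in>rcar A. f (radd A x y) = radd B (f x) (f y)"
  shows "f (rzero A) = rzero B"
proof -
  have z: "rzero A \<in> rcar A" using rng_zero[OF A] .
  have "radd B (f (rzero A)) (f (rzero A)) = radd B (f (rzero A)) (rzero B)"
    using add z rng_add0l[OF A z] rng_add0r[OF B] f by metis
  then show ?thesis using rng_add_left_cancel[OF B] f z rng_zero[OF B] by metis
qed

lemma additive_map_neg:
  assumes A: "is_rng A" and B: "is_rng B" and f: "\<forall>x\<in>rcar A. f x \<in> rcar B"
    and add: "\<forall>x\<in>rcar A. \<forall>y\<in>rcar A. f (radd A x y) = radd B (f x) (f y)" and x: "x \<in> rcar A"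
  shows "f (rneg A x) = rneg B (f x)"
proof -
  have "radd B (f x) (f (rneg A x)) = rzero B"
    using add x rng_negc[OF A x] rng_negr[OF A x] additive_map_zero[OF A B f add] by metis
  then show ?thesis using rng_neg_unique[OF B] f x rng_negc[OF A x] by metis
qed

section \<open>Filtered categories and pro-rings\<close>

locale filtered_category =
  fixes C :: "('o, 'm) cat"
  assumes filtered: "filtered C"
begin

lemma category: "category C"
  using filtered unfolding filtered_def by blast

lemma hom_ob_dom: "u \<in> hom C x y \<Longrightarrow> x \<in> Ob C"
  and hom_ob_cod: "u \<in> hom C x y \<Longrightarrow> y \<in> Ob C"
  using category unfolding category_def hom_def by auto

lemma idn_hom: "x \<in> Ob C \<Longrightarrow> Idn C x \<in> hom C x x"
  using category unfolding category_def by auto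

lemma cmp_hom: "f \<in> hom C x y \<Longrightarrow> g \<in> hom C y z \<Longrightarrow> Cmp C g f \<in> hom C x z"
  using category unfolding category_def hom_def by auto

lemma cmp_assoc:
  "f \<in> hom C x y \<Longrightarrow> g \<in> hom C y z \<Longrightarrow> h \<in> hom C z w \<Longrightarrow> Cmp C h (Cmp C g f) = Cmp C (Cmp C h g) f"
  using category unfolding category_def hom_def by auto

lemma cmp_idl: "f \<in> hom C x y \<Longrightarrow> Cmp C (Idn C y) f = f"
  and cmp_idr: "f \<in> hom C x y \<Longrightarrow> Cmp C f (Idn C x) = f"
  using category unfolding category_def hom_def by auto

lemma ob_nonempty: "Ob C \<noteq> {}"
  using filtered unfolding filtered_def by blast

lemma upper_bound: "x \<in> Ob C \<Longrightarrow> y \<in> Ob C \<Longrightarrow> \<exists>z u v. u \<in> hom C x z \<and> v \<in> hom C y z"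
  using filtered unfolding filtered_def by blast

lemma coequalize: "u \<in> hom C x y \<Longrightarrow> v \<in> hom C x y \<Longrightarrow> \<exists>z w. w \<in> hom C y z \<and> Cmp C w u = Cmp C w v"
  using filtered unfolding filtered_def by blast

lemma ub_hom:
  assumes "x \<in> Ob C" "y \<in> Ob C"
  shows "fst (snd (ub C x y)) \<in> hom C x (fst (ub C x y)) \<and> snd (snd (ub C x y)) \<in> hom C y (fst (ub C x y))"
proof -
  obtain z u v where "u \<in> hom C x z" "v \<in> hom C y z" using upper_bound assms by blast
  then have "\<exists>p. case p of (z, u, v) \<Rightarrow> u \<in> hom C x z \<and> v \<in> hom C y z" by auto
  then have "case ub C x y of (z, u, v) \<Rightarrow> u \<in> hom C x z \<and> v \<in> hom C y z"
    unfolding ub_def by (rule someI_ex)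
  then show ?thesis by (cases "ub C x y") auto
qed

lemma finite_cone: "set os \<subseteq> Ob C \<Longrightarrow> \<exists>L c. L \<in> Ob C \<and> (\<forall>x\<in>set os. c x \<in> hom C x L)"
proof (induction os)
  case Nil
  then show ?case using ob_nonempty by auto
next
  case (Cons y os)
  then obtain L c where L: "L \<in> Ob C" "\<forall>x\<in>set os. c x \<in> hom C x L" by auto
  have "y \<in> Ob C" using Cons.prems by simp
  then obtain z u v where uv: "u \<in> hom C L z" "v \<in> hom C y z" using upper_bound[OF L(1)] by blast
  show ?case
    by (rule exI[of _ z], rule exI[of _ "\<lambda>x. if x = y then v else Cmp C u (c x)"])
       (use uv L hom_ob_cod[OF uv(1)] in \<open>auto intro: cmp_hom\<close>)
qed

text \<open>A finite diagram is given by its objects \<open>os\<close> and its edges \<open>(x, y, e)\<close> with \<open>e : x \<rightarrow> y\<close>.\<close>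
lemma finite_cocone:
  assumes "set os \<subseteq> Ob C" "\<forall>(x, y, e)\<in>set E. x \<in> set os \<and> y \<in> set os \<and> e \<in> hom C x y"
  shows "\<exists>L c. L \<in> Ob C \<and> (\<forall>x\<in>set os. c x \<in> hom C x L) \<and> (\<forall>(x, y, e)\<in>set E. Cmp C (c y) e = c x)"
  using assms(2)
proof (induction E)
  case Nil
  then show ?case using finite_cone[OF assms(1)] by auto
next
  case (Cons edge E)
  obtain x y e where edge: "edge = (x, y, e)" by (cases edge) auto
  from Cons obtain L c where L: "L \<in> Ob C" "\<forall>x\<in>set os. c x \<in> hom C x L"
    "\<forall>(x, y, e)\<in>set E. Cmp C (c y) e = c x" by auto
  have xy: "x \<in> set os" "y \<in> set os" "e \<in> hom C x y" using Cons.prems edge by auto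
  then have "Cmp C (c y) e \<in> hom C x L" "c x \<in> hom C x L" using L by (auto intro: cmp_hom)
  then obtain z w where w: "w \<in> hom C L z" "Cmp C w (Cmp C (c y) e) = Cmp C w (c x)"
    using coequalize by blast
  have "Cmp C (Cmp C w (c y')) e' = Cmp C w (c x')" if "(x', y', e') \<in> set (edge # E)" for x' y' e'
  proof -
    have "x' \<in> set os" "y' \<in> set os" "e' \<in> hom C x' y'" using that Cons.prems by auto
    then have "Cmp C (Cmp C w (c y')) e' = Cmp C w (Cmp C (c y') e')"
      using cmp_assoc w(1) L(2) by metis
    then show ?thesis using that L(3) w(2) edge by auto
  qed
  then show ?case
    using hom_ob_cod[OF w(1)] L(2) w(1) by (intro exI[of _ z] exI[of _ "\<lambda>x. Cmp C w (c x)"]) (auto intro: cmp_hom)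
qed

end

lemma hom_prod_cat:
  "u \<in> hom (prod_cat C D) x y \<longleftrightarrow> fst u \<in> hom C (fst x) (fst y) \<and> snd u \<in> hom D (snd x) (snd y)"
  by (cases u) (auto simp: hom_def prod_cat_def split_beta)

lemma und_simps: "Ix (und R') = PIx R'" "Lv (und R') = (\<lambda>i. rcar (PRg R' i))" "Tr (und R') = PTr R'"
  by (simp_all add: und_def)

locale pro_ring =
  fixes R :: "('o, 'm, 'r) prorng"
  assumes prorng: "is_prorng R"
begin

abbreviation "I \<equiv> PIx R"
abbreviation "tr \<equiv> PTr R"
abbreviation "Rc j \<equiv> rcar (PRg R j)"
abbreviation "ad j \<equiv> radd (PRg R j)"
abbreviation "mu j \<equiv> rmul (PRg R j)"
abbreviation "ze j \<equiv> rzero (PRg R j)"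
abbreviation "ng j \<equiv> rneg (PRg R j)"

sublocale filtered_category I
  using prorng unfolding is_prorng_def proset_def und_def by unfold_locales simp

lemma tr_mem: "u \<in> hom I x y \<Longrightarrow> z \<in> Rc y \<Longrightarrow> tr u z \<in> Rc x"
  using prorng unfolding is_prorng_def proset_def und_def hom_def by auto

lemma tr_idn: "x \<in> Ob I \<Longrightarrow> z \<in> Rc x \<Longrightarrow> tr (Idn I x) z = z"
  using prorng unfolding is_prorng_def proset_def und_def by auto

lemma tr_cmp: "f \<in> hom I x y \<Longrightarrow> g \<in> hom I y w \<Longrightarrow> z \<in> Rc w \<Longrightarrow> tr (Cmp I g f) z = tr f (tr g z)"
  using prorng unfolding is_prorng_def proset_def und_def hom_def by auto

lemma level_rng: "x \<in> Ob I \<Longrightarrow> is_rng (PRg R x)"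
  using prorng unfolding is_prorng_def by auto

lemma tr_rng_hom: "u \<in> hom I x y \<Longrightarrow> rng_hom (PRg R y) (PRg R x) (tr u)"
  using prorng unfolding is_prorng_def hom_def by auto

lemma tr_add: "u \<in> hom I x y \<Longrightarrow> z \<in> Rc y \<Longrightarrow> z' \<in> Rc y \<Longrightarrow> tr u (ad y z z') = ad x (tr u z) (tr u z')"
  and tr_mul: "u \<in> hom I x y \<Longrightarrow> z \<in> Rc y \<Longrightarrow> z' \<in> Rc y \<Longrightarrow> tr u (mu y z z') = mu x (tr u z) (tr u z')"
  using tr_rng_hom[of u x y] unfolding rng_hom_def by auto

lemma finite_cocone_tr:
  assumes "set os \<subseteq> Ob I" "\<forall>(x, y, e)\<in>set E. x \<in> set os \<and> y \<in> set os \<and> e \<in> hom I x y"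
  shows "\<exists>L c. L \<in> Ob I \<and> (\<forall>x\<in>set os. c x \<in> hom I x L) \<and>
     (\<forall>(x, y, e)\<in>set E. Cmp I (c y) e = c x \<and> (\<forall>z\<in>Rc L. tr e (tr (c y) z) = tr (c x) z))"
proof -
  obtain L c where L: "L \<in> Ob I" "\<forall>x\<in>set os. c x \<in> hom I x L" "\<forall>(x, y, e)\<in>set E. Cmp I (c y) e = c x"
    using finite_cocone[OF assms] by blast
  have "tr e (tr (c y) z) = tr (c x) z" if "(x, y, e) \<in> set E" "z \<in> Rc L" for x y e z
    using that assms(2) L tr_cmp by fastforce
  then show ?thesis using L by blast
qed

end

section \<open>Good triples\<close>

locale pro_ring_action = pro_ring R for R :: "('o, 'm, 'r) prorng" +
  fixes A :: "('o, 'o, 'k::comm_ring_1 \<times> 'r, 'r) promap"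
  assumes action_promor: "promor (cprod (UNIV :: 'k set) (und R)) (und R) A"
    and action_mult:
      "promor_eq (cprod (UNIV :: ('k \<times> 'k) set) (und R)) (und R)
         (pcomp A (lw (\<lambda>j ((k, k'), a). (k * k', a))))
         (pcomp A (pcomp (ctimes A) (lw (\<lambda>j ((k, k'), a). (k, (k', a))))))"
    and action_unit:
      "promor_eq (und R) (und R) (pcomp A (lw (\<lambda>j a. (1, a)))) pid"
    and action_add_right:
      "promor_eq (cprod (UNIV :: 'k set) (pprod (und R) (und R))) (und R)
         (pcomp A (ctimes (padd R)))
         (pcomp (padd R) (pcomp (ptimes A A) (lw (\<lambda>j (k, (a, b)). ((k, a), (k, b))))))"
    and action_add_left:
      "promor_eq (cprod (UNIV :: ('k \<times> 'k) set) (und R)) (und R)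
         (pcomp A (lw (\<lambda>j ((k, k'), a). (k + k', a))))
         (pcomp (padd R) (pcomp (ptimes A A)
            (pcomp (lw (\<lambda>j ((k, k'), (a, b)). ((k, a), (k', b)))) (ctimes (diag (und R))))))"
    and action_mul_left:
      "promor_eq (cprod (UNIV :: 'k set) (pprod (und R) (und R))) (und R)
         (pcomp A (ctimes (pmul R)))
         (pcomp (pmul R) (pcomp (ptimes A pid) (lw (\<lambda>j (k, (a, b)). ((k, a), b)))))"
    and action_mul_right:
      "promor_eq (cprod (UNIV :: 'k set) (pprod (und R) (und R))) (und R)
         (pcomp A (ctimes (pmul R)))
         (pcomp (pmul R) (pcomp (ptimes pid A) (lw (\<lambda>j (k, (a, b)). (a, (k, b))))))"
begin

text \<open>The representative of the action reads the level \<open>aix j\<close> of \<open>R\<close> to produce the level \<open>j\<close>.\<close>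
abbreviation "aix \<equiv> fst A"
abbreviation "act j k x \<equiv> snd A j (k, x)"

lemma aix_ob: "j \<in> Ob I \<Longrightarrow> aix j \<in> Ob I"
  using action_promor unfolding promor_def cprod_def und_def by auto

lemma act_mem: "j \<in> Ob I \<Longrightarrow> x \<in> Rc (aix j) \<Longrightarrow> act j k x \<in> Rc j"
  using action_promor unfolding promor_def cprod_def und_def by auto

lemma naturality_germ:
  "v \<in> hom I j j' \<Longrightarrow> \<exists>n r r'. r \<in> hom I (aix j') n \<and> r' \<in> hom I (aix j) n \<and>
     (\<forall>x\<in>Rc n. \<forall>k. tr v (act j' k (tr r x)) = act j k (tr r' x))"
  using action_promor unfolding promor_def germ_eq_def und_def cprod_def hom_def
  by (simp add: split_beta) blast

lemma unit_germ:
  "j \<in> Ob I \<Longrightarrow> \<exists>m u u'. u \<in> hom I (aix j) m \<and> u' \<in> hom I j m \<and> (\<forall>x\<in>Rc m. act j 1 (tr u x) = tr u' x)"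
  using action_unit unfolding promor_eq_def germ_eq_def pcomp_def lw_def pid_def und_def by simp

lemma mult_germ:
  "j \<in> Ob I \<Longrightarrow> \<exists>m u u'. u \<in> hom I (aix j) m \<and> u' \<in> hom I (aix (aix j)) m \<and>
     (\<forall>x\<in>Rc m. \<forall>k c. act j (k * c) (tr u x) = act j k (act (aix j) c (tr u' x)))"
  using action_mult unfolding promor_eq_def germ_eq_def pcomp_def lw_def und_def cprod_def ctimes_def
  by simp blast

text \<open>The diagonal enters through the chosen upper bound of \<open>aix j\<close> with itself.\<close>
lemma add_left_germ:
  "j \<in> Ob I \<Longrightarrow> \<exists>m u u'. u \<in> hom I (aix j) m \<and> u' \<in> hom I (fst (ub I (aix j) (aix j))) m \<and>
     (\<forall>x\<in>Rc m. \<forall>k c. act j (k + c) (tr u x) =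
        ad j (act j k (tr (fst (snd (ub I (aix j) (aix j)))) (tr u' x)))
             (act j c (tr (snd (snd (ub I (aix j) (aix j)))) (tr u' x))))"
  using action_add_left unfolding promor_eq_def germ_eq_def pcomp_def lw_def und_def cprod_def
    ctimes_def padd_def ptimes_def diag_def
  by (simp add: split_beta) blast

lemma add_right_germ:
  "j \<in> Ob I \<Longrightarrow> \<exists>m1 m2 u1 u2 u1' u2'. u1 \<in> hom I (aix j) m1 \<and> u2 \<in> hom I (aix j) m2 \<and>
     u1' \<in> hom I (aix j) m1 \<and> u2' \<in> hom I (aix j) m2 \<and>
     (\<forall>x\<in>Rc m1. \<forall>y\<in>Rc m2. \<forall>k.
        act j k (ad (aix j) (tr u1 x) (tr u2 y)) = ad j (act j k (tr u1' x)) (act j k (tr u2' y)))"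
  using action_add_right unfolding promor_eq_def germ_eq_def pcomp_def lw_def und_def cprod_def
    ctimes_def padd_def ptimes_def pprod_def
  by (simp add: split_beta hom_prod_cat) (drule bspec, assumption, elim exE conjE, (intro exI conjI; assumption?); auto)

lemma mul_left_germ:
  "j \<in> Ob I \<Longrightarrow> \<exists>m1 m2 u1 u2 u1' u2'. u1 \<in> hom I (aix j) m1 \<and> u2 \<in> hom I (aix j) m2 \<and>
     u1' \<in> hom I (aix j) m1 \<and> u2' \<in> hom I j m2 \<and>
     (\<forall>x\<in>Rc m1. \<forall>y\<in>Rc m2. \<forall>k. act j k (mu (aix j) (tr u1 x) (tr u2 y)) = mu j (act j k (tr u1' x)) (tr u2' y))"
  using action_mul_left unfolding promor_eq_def germ_eq_def pcomp_def lw_def pid_def und_def cprod_def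
    ctimes_def pmul_def ptimes_def pprod_def
  by (simp add: split_beta hom_prod_cat) (drule bspec, assumption, elim exE conjE, (intro exI conjI; assumption?); auto)

lemma mul_right_germ:
  "j \<in> Ob I \<Longrightarrow> \<exists>m1 m2 u1 u2 u1' u2'. u1 \<in> hom I (aix j) m1 \<and> u2 \<in> hom I (aix j) m2 \<and>
     u1' \<in> hom I j m1 \<and> u2' \<in> hom I (aix j) m2 \<and>
     (\<forall>x\<in>Rc m1. \<forall>y\<in>Rc m2. \<forall>k. act j k (mu (aix j) (tr u1 x) (tr u2 y)) = mu j (tr u1' x) (act j k (tr u2' y)))"
  using action_mul_right unfolding promor_eq_def germ_eq_def pcomp_def lw_def pid_def und_def cprod_def
    ctimes_def pmul_def ptimes_def pprod_def
  by (simp add: split_beta hom_prod_cat) (drule bspec, assumption, elim exE conjE, (intro exI conjI; assumption?); auto)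


definition act_scalar_additive :: "'o \<Rightarrow> 'o \<Rightarrow> 'm \<Rightarrow> bool" where
  "act_scalar_additive j l t \<longleftrightarrow>
     (\<forall>y\<in>Rc l. \<forall>k c. act j (k + c) (tr t y) = ad j (act j k (tr t y)) (act j c (tr t y)))"

definition act_additive :: "'o \<Rightarrow> 'o \<Rightarrow> 'm \<Rightarrow> bool" where
  "act_additive j l t \<longleftrightarrow>
     (\<forall>y\<in>Rc l. \<forall>y'\<in>Rc l. \<forall>k. act j k (tr t (ad l y y')) = ad j (act j k (tr t y)) (act j k (tr t y')))"

definition act_unital :: "'o \<Rightarrow> 'o \<Rightarrow> 'm \<Rightarrow> bool" where
  "act_unital j l t \<longleftrightarrow> (\<exists>s\<in>hom I j l. \<forall>y\<in>Rc l. act j 1 (tr t y) = tr s y)"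

definition act_multiplicative :: "'o \<Rightarrow> 'o \<Rightarrow> 'm \<Rightarrow> bool" where
  "act_multiplicative j l t \<longleftrightarrow>
     (\<forall>y\<in>Rc l. \<forall>y'\<in>Rc l. \<forall>k c. mu j (act j k (tr t y)) (act j c (tr t y')) = act j (k * c) (tr t (mu l y y')))"

definition refinement_stable :: "('o \<Rightarrow> 'o \<Rightarrow> 'm \<Rightarrow> bool) \<Rightarrow> bool" where
  "refinement_stable P \<longleftrightarrow>
     (\<forall>j l t l' q. t \<in> hom I (aix j) l \<longrightarrow> q \<in> hom I l l' \<longrightarrow> P j l t \<longrightarrow> P j l' (Cmp I q t))"

definition attainable :: "('o \<Rightarrow> 'o \<Rightarrow> 'm \<Rightarrow> bool) \<Rightarrow> bool" where
  "attainable P \<longleftrightarrow> (\<forall>j\<in>Ob I. \<exists>l t. t \<in> hom I (aix j) l \<and> P j l t)"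

lemma refinement_stable_scalar_additive: "refinement_stable act_scalar_additive"
  unfolding refinement_stable_def act_scalar_additive_def by (auto simp: tr_cmp tr_mem)

lemma refinement_stable_additive: "refinement_stable act_additive"
  unfolding refinement_stable_def act_additive_def
  by (auto simp: tr_cmp tr_mem tr_add level_rng hom_ob_cod rng_addc)

lemma refinement_stable_multiplicative: "refinement_stable act_multiplicative"
  unfolding refinement_stable_def act_multiplicative_def
  by (auto simp: tr_cmp tr_mem tr_mul level_rng hom_ob_cod rng_mulc)

lemma refinement_stable_unital: "refinement_stable act_unital"
  unfolding refinement_stable_def act_unital_def
proof (intro allI impI)
  fix j l t l' q assume t: "t \<in> hom I (aix j) l" and q: "q \<in> hom I l l'"
    and "\<exists>s\<in>hom I j l. \<forall>y\<in>Rc l. act j 1 (tr t y) = tr s y"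
  then obtain s where s: "s \<in> hom I j l" "\<forall>y\<in>Rc l. act j 1 (tr t y) = tr s y" by blast
  then have "\<forall>y\<in>Rc l'. act j 1 (tr (Cmp I q t) y) = tr (Cmp I q s) y"
    using tr_cmp[OF t q] tr_cmp[OF s(1) q] tr_mem[OF q] by simp
  then show "\<exists>s\<in>hom I j l'. \<forall>y\<in>Rc l'. act j 1 (tr (Cmp I q t) y) = tr s y" using cmp_hom[OF s(1) q] by blast
qed

text \<open>The given map and one attaining \<open>P\<close> become equal after passing to a common upper bound
  and coequalizing.\<close>
lemma attainable_refine:
  assumes P: "refinement_stable P" "attainable P" and j: "j \<in> Ob I" and t: "t \<in> hom I (aix j) l"
  shows "\<exists>l' q. q \<in> hom I l l' \<and> P j l' (Cmp I q t)"
proof -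
  obtain L w where w: "w \<in> hom I (aix j) L" "P j L w" using P(2) j unfolding attainable_def by blast
  obtain z u v where uv: "u \<in> hom I l z" "v \<in> hom I L z"
    using upper_bound hom_ob_cod[OF t] hom_ob_cod[OF w(1)] by blast
  obtain z' e where e: "e \<in> hom I z z'" "Cmp I e (Cmp I u t) = Cmp I e (Cmp I v w)"
    using coequalize[OF cmp_hom[OF t uv(1)] cmp_hom[OF w(1) uv(2)]] by blast
  have "P j z' (Cmp I e (Cmp I v w))"
    using P(1) w uv(2) e(1) cmp_hom[OF w(1) uv(2)] unfolding refinement_stable_def by blast
  then have "P j z' (Cmp I (Cmp I e u) t)" using e(2) cmp_assoc[OF t uv(1) e(1)] by simp
  then show ?thesis using cmp_hom[OF uv(1) e(1)] by blast
qed

lemma attainable_conj: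
  assumes "refinement_stable P" "refinement_stable Q" "attainable P" "attainable Q"
  shows "attainable (\<lambda>j l t. P j l t \<and> Q j l t)"
  unfolding attainable_def
proof
  fix j assume j: "j \<in> Ob I"
  obtain l t where t: "t \<in> hom I (aix j) l" "P j l t" using assms(3) j unfolding attainable_def by blast
  obtain l' q where q: "q \<in> hom I l l'" "Q j l' (Cmp I q t)" using attainable_refine[OF assms(2,4) j t(1)] by blast
  have "P j l' (Cmp I q t)" using assms(1) t q(1) unfolding refinement_stable_def by blast
  then show "\<exists>l t. t \<in> hom I (aix j) l \<and> P j l t \<and> Q j l t" using q cmp_hom[OF t(1) q(1)] by blast
qed

lemma attainable_scalar_additive: "attainable act_scalar_additive"
  unfolding attainable_def
proof
  fix j assume j: "j \<in> Ob I"
  define e where "e = fst (ub I (aix j) (aix j))"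
  define v1 where "v1 = fst (snd (ub I (aix j) (aix j)))"
  define v2 where "v2 = snd (snd (ub I (aix j) (aix j)))"
  obtain m u u' where g: "u \<in> hom I (aix j) m" "u' \<in> hom I e m"
    "\<forall>x\<in>Rc m. \<forall>k c. act j (k + c) (tr u x) = ad j (act j k (tr v1 (tr u' x))) (act j c (tr v2 (tr u' x)))"
    using add_left_germ[OF j] unfolding e_def v1_def v2_def by blast
  have v: "v1 \<in> hom I (aix j) e" "v2 \<in> hom I (aix j) e"
    using ub_hom[OF aix_ob[OF j] aix_ob[OF j]] unfolding e_def v1_def v2_def by auto
  obtain L c where L: "\<forall>x\<in>set [aix j, m, e]. c x \<in> hom I x L"
     "\<forall>(x, y, f)\<in>set [(aix j, m, u), (e, m, u'), (aix j, e, v1), (aix j, e, v2)].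
        Cmp I (c y) f = c x \<and> (\<forall>z\<in>Rc L. tr f (tr (c y) z) = tr (c x) z)"
    using finite_cocone_tr[of "[aix j, m, e]" "[(aix j, m, u), (e, m, u'), (aix j, e, v1), (aix j, e, v2)]"]
      g v aix_ob[OF j] hom_ob_cod[OF g(1)] hom_ob_cod[OF v(1)] by auto
  have "act_scalar_additive j L (c (aix j))"
    unfolding act_scalar_additive_def
  proof (intro ballI allI)
    fix z k k' assume z: "z \<in> Rc L"
    have c: "c m \<in> hom I m L" using L(1) by simp
    have "tr u (tr (c m) z) = tr (c (aix j)) z" "tr u' (tr (c m) z) = tr (c e) z"
      "tr v1 (tr (c e) z) = tr (c (aix j)) z" "tr v2 (tr (c e) z) = tr (c (aix j)) z"
      using L(2) z by auto
    then show "act j (k + k') (tr (c (aix j)) z) =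
        ad j (act j k (tr (c (aix j)) z)) (act j k' (tr (c (aix j)) z))"
      using g(3)[rule_format, OF tr_mem[OF c z], of k k'] by simp
  qed
  then show "\<exists>l t. t \<in> hom I (aix j) l \<and> act_scalar_additive j l t" using L(1) by auto
qed

lemma attainable_additive: "attainable act_additive"
  unfolding attainable_def
proof
  fix j assume j: "j \<in> Ob I"
  obtain m1 m2 u1 u2 u1' u2' where g: "u1 \<in> hom I (aix j) m1" "u2 \<in> hom I (aix j) m2"
    "u1' \<in> hom I (aix j) m1" "u2' \<in> hom I (aix j) m2"
    "\<forall>x\<in>Rc m1. \<forall>y\<in>Rc m2. \<forall>k.
       act j k (ad (aix j) (tr u1 x) (tr u2 y)) = ad j (act j k (tr u1' x)) (act j k (tr u2' y))"
    using add_right_germ[OF j] by blast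
  obtain L c where L: "L \<in> Ob I" "\<forall>x\<in>set [aix j, m1, m2]. c x \<in> hom I x L"
     "\<forall>(x, y, f)\<in>set [(aix j, m1, u1), (aix j, m2, u2), (aix j, m1, u1'), (aix j, m2, u2')].
        Cmp I (c y) f = c x \<and> (\<forall>z\<in>Rc L. tr f (tr (c y) z) = tr (c x) z)"
    using finite_cocone_tr[of "[aix j, m1, m2]" "[(aix j, m1, u1), (aix j, m2, u2), (aix j, m1, u1'), (aix j, m2, u2')]"]
      g aix_ob[OF j] hom_ob_cod[OF g(1)] hom_ob_cod[OF g(2)] by auto
  have c: "c m1 \<in> hom I m1 L" "c m2 \<in> hom I m2 L" "c (aix j) \<in> hom I (aix j) L" using L(2) by auto
  have "act_additive j L (c (aix j))"
    unfolding act_additive_def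
  proof (intro ballI allI)
    fix z z' k assume z: "z \<in> Rc L" and z': "z' \<in> Rc L"
    have E: "tr u1 (tr (c m1) z) = tr (c (aix j)) z" "tr u2 (tr (c m2) z') = tr (c (aix j)) z'"
      "tr u1' (tr (c m1) z) = tr (c (aix j)) z" "tr u2' (tr (c m2) z') = tr (c (aix j)) z'"
      using L(3) z z' by auto
    have "tr (c (aix j)) (ad L z z') = ad (aix j) (tr u1 (tr (c m1) z)) (tr u2 (tr (c m2) z'))"
      using tr_add[OF c(3) z z'] E by simp
    then show "act j k (tr (c (aix j)) (ad L z z')) =
        ad j (act j k (tr (c (aix j)) z)) (act j k (tr (c (aix j)) z'))"
      using g(5)[rule_format, OF tr_mem[OF c(1) z] tr_mem[OF c(2) z'], of k] E by simp
  qed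
  then show "\<exists>l t. t \<in> hom I (aix j) l \<and> act_additive j l t" using c(3) by auto
qed

lemma attainable_unital: "attainable act_unital"
  unfolding attainable_def
proof
  fix j assume j: "j \<in> Ob I"
  obtain m u u' where g: "u \<in> hom I (aix j) m" "u' \<in> hom I j m" "\<forall>x\<in>Rc m. act j 1 (tr u x) = tr u' x"
    using unit_germ[OF j] by blast
  obtain L c where L: "\<forall>x\<in>set [aix j, j, m]. c x \<in> hom I x L"
     "\<forall>(x, y, f)\<in>set [(aix j, m, u), (j, m, u')].
        Cmp I (c y) f = c x \<and> (\<forall>z\<in>Rc L. tr f (tr (c y) z) = tr (c x) z)"
    using finite_cocone_tr[of "[aix j, j, m]" "[(aix j, m, u), (j, m, u')]"]
      g aix_ob[OF j] j hom_ob_cod[OF g(1)] by auto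
  have "act j 1 (tr (c (aix j)) z) = tr (c j) z" if z: "z \<in> Rc L" for z
  proof -
    have "tr u (tr (c m) z) = tr (c (aix j)) z" "tr u' (tr (c m) z) = tr (c j) z" using L(2) z by auto
    then show ?thesis using g(3) tr_mem L(1) z by force
  qed
  then have "act_unital j L (c (aix j))" unfolding act_unital_def using L(1) by auto
  then show "\<exists>l t. t \<in> hom I (aix j) l \<and> act_unital j l t" using L(1) by auto
qed


lemma mul_act_left_germ:
  assumes j: "j \<in> Ob I"
  shows "\<exists>m w w'. w \<in> hom I (aix j) m \<and> w' \<in> hom I (aix (aix j)) m \<and>
    (\<forall>z\<in>Rc m. \<forall>z'\<in>Rc m. \<forall>k k'. mu j (act j k (tr w z)) (act j k' (tr w z')) =
       act j k (mu (aix j) (tr w z) (act (aix j) k' (tr w' z'))))"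
proof -
  obtain m1 m2 u1 u2 u1' u2' where g1: "u1 \<in> hom I (aix j) m1" "u2 \<in> hom I (aix j) m2"
    "u1' \<in> hom I (aix j) m1" "u2' \<in> hom I j m2"
    "\<forall>x\<in>Rc m1. \<forall>y\<in>Rc m2. \<forall>k. act j k (mu (aix j) (tr u1 x) (tr u2 y)) = mu j (act j k (tr u1' x)) (tr u2' y)"
    using mul_left_germ[OF j] by blast
  obtain n2 r r' where g2: "r \<in> hom I (aix m2) n2" "r' \<in> hom I (aix j) n2"
    "\<forall>x\<in>Rc n2. \<forall>k. tr u2' (act m2 k (tr r x)) = act j k (tr r' x)"
    using naturality_germ[OF g1(4)] by blast
  obtain n3 r3 r3' where g3: "r3 \<in> hom I (aix m2) n3" "r3' \<in> hom I (aix (aix j)) n3"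
    "\<forall>x\<in>Rc n3. \<forall>k. tr u2 (act m2 k (tr r3 x)) = act (aix j) k (tr r3' x)"
    using naturality_germ[OF g1(2)] by blast
  have m2: "m2 \<in> Ob I" using hom_ob_cod[OF g1(2)] .
  have obs: "set [j, aix j, aix (aix j), m1, m2, aix m2, n2, n3] \<subseteq> Ob I"
    using j aix_ob[OF j] aix_ob[OF aix_ob[OF j]] hom_ob_cod[OF g1(1)] m2 aix_ob[OF m2]
      hom_ob_cod[OF g2(1)] hom_ob_cod[OF g3(1)] by auto
  let ?E = "[(aix j, m1, u1), (aix j, m2, u2), (aix j, m1, u1'), (j, m2, u2'), (aix m2, n2, r),
    (aix j, n2, r'), (aix m2, n3, r3), (aix (aix j), n3, r3')]"
  obtain L c where L: "\<forall>x\<in>set [j, aix j, aix (aix j), m1, m2, aix m2, n2, n3]. c x \<in> hom I x L"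
     "\<forall>(x, y, f)\<in>set ?E. Cmp I (c y) f = c x \<and> (\<forall>z\<in>Rc L. tr f (tr (c y) z) = tr (c x) z)"
    using finite_cocone_tr[OF obs, of ?E] g1 g2 g3 j by auto
  have c: "c m1 \<in> hom I m1 L" "c (aix m2) \<in> hom I (aix m2) L" "c n2 \<in> hom I n2 L" "c n3 \<in> hom I n3 L"
    using L(1) by auto
  have "mu j (act j k (tr (c (aix j)) z)) (act j k' (tr (c (aix j)) z')) =
      act j k (mu (aix j) (tr (c (aix j)) z) (act (aix j) k' (tr (c (aix (aix j))) z')))"
    if z: "z \<in> Rc L" and z': "z' \<in> Rc L" for z z' k k'
  proof -
    define B where "B = act m2 k' (tr (c (aix m2)) z')"
    have B: "B \<in> Rc m2" unfolding B_def using act_mem[OF m2 tr_mem[OF c(2) z']] .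
    have E: "tr u1 (tr (c m1) z) = tr (c (aix j)) z" "tr u1' (tr (c m1) z) = tr (c (aix j)) z"
      "tr r (tr (c n2) z') = tr (c (aix m2)) z'" "tr r' (tr (c n2) z') = tr (c (aix j)) z'"
      "tr r3 (tr (c n3) z') = tr (c (aix m2)) z'" "tr r3' (tr (c n3) z') = tr (c (aix (aix j))) z'"
      using L(2) z z' by auto
    have "act j k' (tr (c (aix j)) z') = tr u2' B"
      using g2(3)[rule_format, OF tr_mem[OF c(3) z'], of k'] E unfolding B_def by simp
    then have "mu j (act j k (tr (c (aix j)) z)) (act j k' (tr (c (aix j)) z')) =
        act j k (mu (aix j) (tr (c (aix j)) z) (tr u2 B))"
      using g1(5)[rule_format, OF tr_mem[OF c(1) z] B, of k] E by simp
    also have "tr u2 B = act (aix j) k' (tr (c (aix (aix j))) z')"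
      using g3(3)[rule_format, OF tr_mem[OF c(4) z'], of k'] E unfolding B_def by simp
    finally show ?thesis .
  qed
  then show ?thesis using L(1) by (intro exI[of _ L] exI[of _ "c (aix j)"] exI[of _ "c (aix (aix j))"]) auto
qed

lemma mul_act_germ:
  assumes j: "j \<in> Ob I"
  shows "\<exists>m u u'. u \<in> hom I (aix j) m \<and> u' \<in> hom I (aix (aix j)) m \<and>
    (\<forall>z\<in>Rc m. \<forall>z'\<in>Rc m. \<forall>k k'.
       mu j (act j k (tr u z)) (act j k' (tr u z')) = act j k (act (aix j) k' (tr u' (mu m z z'))))"
proof -
  obtain m w w' where g1: "w \<in> hom I (aix j) m" "w' \<in> hom I (aix (aix j)) m"
    "\<forall>z\<in>Rc m. \<forall>z'\<in>Rc m. \<forall>k k'. mu j (act j k (tr w z)) (act j k' (tr w z')) =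
       act j k (mu (aix j) (tr w z) (act (aix j) k' (tr w' z')))"
    using mul_act_left_germ[OF j] by blast
  obtain o1 o2 p1 p2 p1' p2' where g2: "p1 \<in> hom I (aix (aix j)) o1" "p2 \<in> hom I (aix (aix j)) o2"
    "p1' \<in> hom I (aix j) o1" "p2' \<in> hom I (aix (aix j)) o2"
    "\<forall>x\<in>Rc o1. \<forall>y\<in>Rc o2. \<forall>k. act (aix j) k (mu (aix (aix j)) (tr p1 x) (tr p2 y)) =
       mu (aix j) (tr p1' x) (act (aix j) k (tr p2' y))"
    using mul_right_germ[OF aix_ob[OF j]] by blast
  have obs: "set [aix j, aix (aix j), m, o1, o2] \<subseteq> Ob I"
    using aix_ob[OF j] aix_ob[OF aix_ob[OF j]] hom_ob_cod[OF g1(1)] hom_ob_cod[OF g2(1)] hom_ob_cod[OF g2(2)]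
    by auto
  let ?E = "[(aix j, m, w), (aix (aix j), m, w'), (aix (aix j), o1, p1), (aix (aix j), o2, p2),
    (aix j, o1, p1'), (aix (aix j), o2, p2')]"
  obtain L c where L: "\<forall>x\<in>set [aix j, aix (aix j), m, o1, o2]. c x \<in> hom I x L"
     "\<forall>(x, y, f)\<in>set ?E. Cmp I (c y) f = c x \<and> (\<forall>z\<in>Rc L. tr f (tr (c y) z) = tr (c x) z)"
    using finite_cocone_tr[OF obs, of ?E] g1 g2 by auto
  have c: "c m \<in> hom I m L" "c (aix (aix j)) \<in> hom I (aix (aix j)) L" "c o1 \<in> hom I o1 L" "c o2 \<in> hom I o2 L"
    using L(1) by auto
  have "mu j (act j k (tr (c (aix j)) z)) (act j k' (tr (c (aix j)) z')) =
      act j k (act (aix j) k' (tr (c (aix (aix j))) (mu L z z')))"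
    if z: "z \<in> Rc L" and z': "z' \<in> Rc L" for z z' k k'
  proof -
    have E: "tr w (tr (c m) z) = tr (c (aix j)) z" "tr w (tr (c m) z') = tr (c (aix j)) z'"
      "tr w' (tr (c m) z') = tr (c (aix (aix j))) z'"
      "tr p1 (tr (c o1) z) = tr (c (aix (aix j))) z" "tr p2 (tr (c o2) z') = tr (c (aix (aix j))) z'"
      "tr p1' (tr (c o1) z) = tr (c (aix j)) z" "tr p2' (tr (c o2) z') = tr (c (aix (aix j))) z'"
      using L(2) z z' by auto
    have "mu j (act j k (tr (c (aix j)) z)) (act j k' (tr (c (aix j)) z')) =
        act j k (mu (aix j) (tr (c (aix j)) z) (act (aix j) k' (tr (c (aix (aix j))) z')))"
      using g1(3)[rule_format, OF tr_mem[OF c(1) z] tr_mem[OF c(1) z'], of k k'] E by simp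
    also have "mu (aix j) (tr (c (aix j)) z) (act (aix j) k' (tr (c (aix (aix j))) z')) =
        act (aix j) k' (mu (aix (aix j)) (tr (c (aix (aix j))) z) (tr (c (aix (aix j))) z'))"
      using g2(5)[rule_format, OF tr_mem[OF c(3) z] tr_mem[OF c(4) z'], of k'] E by simp
    also have "mu (aix (aix j)) (tr (c (aix (aix j))) z) (tr (c (aix (aix j))) z') = tr (c (aix (aix j))) (mu L z z')"
      using tr_mul[OF c(2) z z'] by simp
    finally show ?thesis .
  qed
  then show ?thesis using L(1) by (intro exI[of _ L] exI[of _ "c (aix j)"] exI[of _ "c (aix (aix j))"]) auto
qed

lemma attainable_multiplicative: "attainable act_multiplicative"
  unfolding attainable_def
proof
  fix j assume j: "j \<in> Ob I"
  obtain m u u' where g1: "u \<in> hom I (aix j) m" "u' \<in> hom I (aix (aix j)) m"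
    "\<forall>z\<in>Rc m. \<forall>z'\<in>Rc m. \<forall>k k'.
       mu j (act j k (tr u z)) (act j k' (tr u z')) = act j k (act (aix j) k' (tr u' (mu m z z')))"
    using mul_act_germ[OF j] by blast
  obtain n v v' where g2: "v \<in> hom I (aix j) n" "v' \<in> hom I (aix (aix j)) n"
    "\<forall>x\<in>Rc n. \<forall>k c. act j (k * c) (tr v x) = act j k (act (aix j) c (tr v' x))"
    using mult_germ[OF j] by blast
  have obs: "set [aix j, aix (aix j), m, n] \<subseteq> Ob I"
    using aix_ob[OF j] aix_ob[OF aix_ob[OF j]] hom_ob_cod[OF g1(1)] hom_ob_cod[OF g2(1)] by auto
  let ?E = "[(aix j, m, u), (aix (aix j), m, u'), (aix j, n, v), (aix (aix j), n, v')]"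
  obtain L c where L: "\<forall>x\<in>set [aix j, aix (aix j), m, n]. c x \<in> hom I x L"
     "\<forall>(x, y, f)\<in>set ?E. Cmp I (c y) f = c x \<and> (\<forall>z\<in>Rc L. tr f (tr (c y) z) = tr (c x) z)"
    using finite_cocone_tr[OF obs, of ?E] g1 g2 by auto
  have c: "c m \<in> hom I m L" "c n \<in> hom I n L" "c (aix j) \<in> hom I (aix j) L" using L(1) by auto
  have "act_multiplicative j L (c (aix j))"
    unfolding act_multiplicative_def
  proof (intro ballI allI)
    fix z z' k k' assume z: "z \<in> Rc L" and z': "z' \<in> Rc L"
    have zz: "mu L z z' \<in> Rc L" using rng_mulc[OF level_rng] hom_ob_cod[OF c(1)] z z' by blast
    have "mu j (act j k (tr (c (aix j)) z)) (act j k' (tr (c (aix j)) z')) =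
        act j k (act (aix j) k' (tr u' (mu m (tr (c m) z) (tr (c m) z'))))"
      using g1(3)[rule_format, OF tr_mem[OF c(1) z] tr_mem[OF c(1) z'], of k k'] L(2) z z' by auto
    also have "\<dots> = act j k (act (aix j) k' (tr (c (aix (aix j))) (mu L z z')))"
      using tr_mul[OF c(1) z z'] L(2) zz by auto
    also have "\<dots> = act j (k * k') (tr (c (aix j)) (mu L z z'))"
      using g2(3)[rule_format, OF tr_mem[OF c(2) zz], of k k'] L(2) zz by auto
    finally show "mu j (act j k (tr (c (aix j)) z)) (act j k' (tr (c (aix j)) z')) =
        act j (k * k') (tr (c (aix j)) (mu L z z'))" .
  qed
  then show "\<exists>l t. t \<in> hom I (aix j) l \<and> act_multiplicative j l t" using c(3) by auto
qed

definition good :: "'o \<times> 'o \<times> 'm \<Rightarrow> bool" where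
  "good \<sigma> \<longleftrightarrow> (case \<sigma> of (j, l, t) \<Rightarrow> j \<in> Ob I \<and> t \<in> hom I (aix j) l \<and>
     act_scalar_additive j l t \<and> act_additive j l t \<and> act_unital j l t \<and> act_multiplicative j l t)"

lemma good_iff: "good (j, l, t) \<longleftrightarrow> j \<in> Ob I \<and> t \<in> hom I (aix j) l \<and>
     act_scalar_additive j l t \<and> act_additive j l t \<and> act_unital j l t \<and> act_multiplicative j l t"
  by (simp add: good_def)

lemma goodD: "good (j, l, t) \<Longrightarrow> j \<in> Ob I \<and> l \<in> Ob I \<and> t \<in> hom I (aix j) l"
  by (auto simp: good_def hom_ob_cod)

lemma refinement_stable_conj:
  "refinement_stable P \<Longrightarrow> refinement_stable Q \<Longrightarrow> refinement_stable (\<lambda>j l t. P j l t \<and> Q j l t)"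
  unfolding refinement_stable_def by blast

lemma good_refine:
  assumes "j \<in> Ob I" "t \<in> hom I (aix j) l"
  shows "\<exists>l' q. q \<in> hom I l l' \<and> good (j, l', Cmp I q t)"
proof -
  let ?P = "\<lambda>j l t. act_scalar_additive j l t \<and> act_additive j l t \<and> act_unital j l t \<and> act_multiplicative j l t"
  have "refinement_stable ?P"
    by (intro refinement_stable_conj refinement_stable_scalar_additive refinement_stable_additive
        refinement_stable_unital refinement_stable_multiplicative)
  moreover have "attainable ?P"
    by (intro attainable_conj refinement_stable_conj attainable_scalar_additive attainable_additive
        attainable_unital attainable_multiplicative refinement_stable_scalar_additive
        refinement_stable_additive refinement_stable_unital refinement_stable_multiplicative)
  ultimately show ?thesis
    using attainable_refine assms cmp_hom[OF assms(2)] unfolding good_iff by (metis (no_types, lifting))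
qed

lemma good_exists: "j \<in> Ob I \<Longrightarrow> \<exists>l t. good (j, l, t)"
  using good_refine[of j "Idn I (aix j)"] idn_hom aix_ob by blast

lemma good_refinement: "good (j, l, t) \<Longrightarrow> q \<in> hom I l l' \<Longrightarrow> good (j, l', Cmp I q t)"
  using refinement_stable_scalar_additive refinement_stable_additive refinement_stable_unital
    refinement_stable_multiplicative cmp_hom
  unfolding good_iff refinement_stable_def by meson

definition good_mor :: "'o \<times> 'o \<times> 'm \<Rightarrow> 'o \<times> 'o \<times> 'm \<Rightarrow> 'm \<Rightarrow> 'm \<Rightarrow> bool" where
  "good_mor \<sigma> \<tau> p q \<longleftrightarrow> good \<sigma> \<and> good \<tau> \<and> (case \<sigma> of (j1, l1, t1) \<Rightarrow> case \<tau> of (j2, l2, t2) \<Rightarrow>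
     p \<in> hom I j1 j2 \<and> q \<in> hom I l1 l2 \<and>
     (\<forall>k. \<forall>y\<in>Rc l2. tr p (act j2 k (tr t2 y)) = act j1 k (tr t1 (tr q y))))"

lemma good_mor_iff: "good_mor (j1, l1, t1) (j2, l2, t2) p q \<longleftrightarrow> good (j1, l1, t1) \<and> good (j2, l2, t2) \<and>
     p \<in> hom I j1 j2 \<and> q \<in> hom I l1 l2 \<and> (\<forall>k. \<forall>y\<in>Rc l2. tr p (act j2 k (tr t2 y)) = act j1 k (tr t1 (tr q y)))"
  by (simp add: good_mor_def)

lemma good_mor_good: "good_mor \<sigma> \<tau> p q \<Longrightarrow> good \<sigma> \<and> good \<tau>"
  unfolding good_mor_def by auto

lemma good_mor_homs: "good_mor \<sigma> \<tau> p q \<Longrightarrow> p \<in> hom I (fst \<sigma>) (fst \<tau>) \<and> q \<in> hom I (fst (snd \<sigma>)) (fst (snd \<tau>))"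
  by (cases \<sigma>; cases \<tau>) (auto simp: good_mor_iff)

lemma good_mor_idn: "good \<sigma> \<Longrightarrow> good_mor \<sigma> \<sigma> (Idn I (fst \<sigma>)) (Idn I (fst (snd \<sigma>)))"
  by (cases \<sigma>) (auto simp: good_mor_iff goodD idn_hom tr_idn act_mem tr_mem dest: goodD)

lemma good_mor_cmp:
  assumes "good_mor (j1, l1, t1) (j2, l2, t2) p q" "good_mor (j2, l2, t2) (j3, l3, t3) p' q'"
  shows "good_mor (j1, l1, t1) (j3, l3, t3) (Cmp I p' p) (Cmp I q' q)"
  unfolding good_mor_iff
proof (intro conjI allI ballI)
  have h: "p \<in> hom I j1 j2" "q \<in> hom I l1 l2" "p' \<in> hom I j2 j3" "q' \<in> hom I l2 l3"
    and g: "good (j1, l1, t1)" "good (j3, l3, t3)"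
    using assms unfolding good_mor_iff by auto
  show "good (j1, l1, t1)" "good (j3, l3, t3)" by (fact g)+
  show "Cmp I p' p \<in> hom I j1 j3" "Cmp I q' q \<in> hom I l1 l3" using h cmp_hom by auto
  fix k y assume y: "y \<in> Rc l3"
  have "tr (Cmp I p' p) (act j3 k (tr t3 y)) = tr p (tr p' (act j3 k (tr t3 y)))"
    using tr_cmp[OF h(1) h(3)] act_mem goodD[OF g(2)] tr_mem y by metis
  also have "\<dots> = tr p (act j2 k (tr t2 (tr q' y)))" using assms(2) y unfolding good_mor_iff by auto
  also have "\<dots> = act j1 k (tr t1 (tr q (tr q' y)))"
    using assms(1) tr_mem[OF h(4) y] unfolding good_mor_iff by auto
  also have "\<dots> = act j1 k (tr t1 (tr (Cmp I q' q) y))" using tr_cmp[OF h(2) h(4) y] by simp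
  finally show "tr (Cmp I p' p) (act j3 k (tr t3 y)) = act j1 k (tr t1 (tr (Cmp I q' q) y))" .
qed

lemma good_mor_refinement:
  assumes g: "good (j, l, t)" and q: "q \<in> hom I l l'"
  shows "good_mor (j, l, t) (j, l', Cmp I q t) (Idn I j) q"
  unfolding good_mor_iff using g good_refinement[OF g q] goodD[OF g] q
  by (auto simp: idn_hom tr_idn act_mem tr_mem tr_cmp)

lemma good_mor_merge:
  assumes g1: "good (j, l1, t1)" and g2: "good (j, l2, t2)"
  shows "\<exists>l t q1 q2. good_mor (j, l1, t1) (j, l, t) (Idn I j) q1 \<and> good_mor (j, l2, t2) (j, l, t) (Idn I j) q2"
proof -
  obtain L c where L: "\<forall>x\<in>set [aix j, l1, l2]. c x \<in> hom I x L"
    "\<forall>(x, y, f)\<in>set [(aix j, l1, t1), (aix j, l2, t2)]. Cmp I (c y) f = c x"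
    using finite_cocone[of "[aix j, l1, l2]" "[(aix j, l1, t1), (aix j, l2, t2)]"] goodD[OF g1] goodD[OF g2] aix_ob
    by auto
  have "Cmp I (c l1) t1 = Cmp I (c l2) t2" using L(2) by auto
  then show ?thesis using good_mor_refinement[OF g1, of "c l1" L] good_mor_refinement[OF g2, of "c l2" L] L(1) by auto
qed

lemma good_mor_extend:
  assumes g: "good (j, l, t)" and p: "p \<in> hom I j j'"
  shows "\<exists>l' t' q. good_mor (j, l, t) (j', l', t') p q"
proof -
  obtain n r r' where n: "r \<in> hom I (aix j') n" "r' \<in> hom I (aix j) n"
    "\<forall>x\<in>Rc n. \<forall>k. tr p (act j' k (tr r x)) = act j k (tr r' x)" using naturality_germ[OF p] by blast
  have gl: "j \<in> Ob I" "l \<in> Ob I" "t \<in> hom I (aix j) l" using goodD[OF g] by auto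
  obtain L c where L: "\<forall>x\<in>set [aix j, l, n]. c x \<in> hom I x L"
    "\<forall>(x, y, f)\<in>set [(aix j, l, t), (aix j, n, r')]. Cmp I (c y) f = c x \<and> (\<forall>z\<in>Rc L. tr f (tr (c y) z) = tr (c x) z)"
    using finite_cocone_tr[of "[aix j, l, n]" "[(aix j, l, t), (aix j, n, r')]"] gl n aix_ob hom_ob_cod[OF n(1)]
    by auto
  have c: "c l \<in> hom I l L" "c n \<in> hom I n L" using L(1) by auto
  have t0: "Cmp I (c n) r \<in> hom I (aix j') L" using cmp_hom[OF n(1) c(2)] .
  obtain L' q where q: "q \<in> hom I L L'" "good (j', L', Cmp I q (Cmp I (c n) r))"
    using good_refine[OF hom_ob_cod[OF p] t0] by blast
  have "good_mor (j, l, t) (j', L', Cmp I q (Cmp I (c n) r)) p (Cmp I q (c l))"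
    unfolding good_mor_iff
  proof (intro conjI allI ballI g q(2) p cmp_hom[OF c(1) q(1)])
    fix k y assume y: "y \<in> Rc L'"
    have y1: "tr q y \<in> Rc L" using tr_mem[OF q(1) y] .
    have "tr p (act j' k (tr (Cmp I q (Cmp I (c n) r)) y)) = tr p (act j' k (tr r (tr (c n) (tr q y))))"
      using tr_cmp[OF t0 q(1) y] tr_cmp[OF n(1) c(2) y1] by simp
    also have "\<dots> = act j k (tr r' (tr (c n) (tr q y)))" using n(3) tr_mem[OF c(2) y1] by simp
    also have "\<dots> = act j k (tr t (tr (c l) (tr q y)))" using L(2) y1 by simp
    also have "\<dots> = act j k (tr t (tr (Cmp I q (c l)) y))" using tr_cmp[OF c(1) q(1) y] by simp
    finally show "tr p (act j' k (tr (Cmp I q (Cmp I (c n) r)) y)) = act j k (tr t (tr (Cmp I q (c l)) y))" .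
  qed
  then show ?thesis by blast
qed

lemma good_upper_bound:
  assumes g1: "good (j1, l1, t1)" and g2: "good (j2, l2, t2)"
  shows "\<exists>j l t p1 q1 p2 q2. good_mor (j1, l1, t1) (j, l, t) p1 q1 \<and> good_mor (j2, l2, t2) (j, l, t) p2 q2"
proof -
  obtain j p1 p2 where p: "p1 \<in> hom I j1 j" "p2 \<in> hom I j2 j" using upper_bound goodD[OF g1] goodD[OF g2] by blast
  obtain la ta qa where a: "good_mor (j1, l1, t1) (j, la, ta) p1 qa" using good_mor_extend[OF g1 p(1)] by blast
  obtain lb tb qb where b: "good_mor (j2, l2, t2) (j, lb, tb) p2 qb" using good_mor_extend[OF g2 p(2)] by blast
  have "good (j, la, ta)" "good (j, lb, tb)" using a b unfolding good_mor_iff by auto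
  then obtain l t r1 r2 where "good_mor (j, la, ta) (j, l, t) (Idn I j) r1" "good_mor (j, lb, tb) (j, l, t) (Idn I j) r2"
    using good_mor_merge by blast
  then show ?thesis using good_mor_cmp a b by blast
qed

lemma good_coequalize:
  assumes m: "good_mor (j1, l1, t1) (j2, l2, t2) p q" and m': "good_mor (j1, l1, t1) (j2, l2, t2) p' q'"
  shows "\<exists>j l t w e. good_mor (j2, l2, t2) (j, l, t) w e \<and> Cmp I w p = Cmp I w p' \<and> Cmp I e q = Cmp I e q'"
proof -
  have h: "p \<in> hom I j1 j2" "p' \<in> hom I j1 j2" "q \<in> hom I l1 l2" "q' \<in> hom I l1 l2" "good (j2, l2, t2)"
    using m m' unfolding good_mor_iff by auto
  obtain j3 w where w: "w \<in> hom I j2 j3" "Cmp I w p = Cmp I w p'" using coequalize[OF h(1) h(2)] by blast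
  obtain l3 t3 q3 where m3: "good_mor (j2, l2, t2) (j3, l3, t3) w q3" using good_mor_extend[OF h(5) w(1)] by blast
  have q3: "q3 \<in> hom I l2 l3" "good (j3, l3, t3)" using m3 unfolding good_mor_iff by auto
  obtain l4 e where e: "e \<in> hom I l3 l4" "Cmp I e (Cmp I q3 q) = Cmp I e (Cmp I q3 q')"
    using coequalize[OF cmp_hom[OF h(3) q3(1)] cmp_hom[OF h(4) q3(1)]] by blast
  have m4: "good_mor (j2, l2, t2) (j3, l4, Cmp I e t3) (Cmp I (Idn I j3) w) (Cmp I e q3)"
    using good_mor_cmp[OF m3 good_mor_refinement[OF q3(2) e(1)]] .
  have "Cmp I (Cmp I (Idn I j3) w) p = Cmp I (Cmp I (Idn I j3) w) p'" using cmp_idl[OF w(1)] w(2) by simp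
  moreover have "Cmp I (Cmp I e q3) q = Cmp I (Cmp I e q3) q'"
    using cmp_assoc[OF h(3) q3(1) e(1)] cmp_assoc[OF h(4) q3(1) e(1)] e(2) by simp
  ultimately show ?thesis using m4 by blast
qed

section \<open>The pro-\<open>K\<close>-algebra of orbits\<close>

text \<open>An element \<open>f\<close> stands for \<open>k \<mapsto> k \<cdot> f 1\<close>,
  which dictates the product \<open>k \<mapsto> f k \<cdot> g 1\<close> and the scalar action \<open>k \<mapsto> f (k * c)\<close>.\<close>
inductive_set orbit_alg :: "'o \<Rightarrow> 'o \<Rightarrow> 'm \<Rightarrow> ('k \<Rightarrow> 'r) set" for j l t where
  orbit: "y \<in> Rc l \<Longrightarrow> (\<lambda>k. act j k (tr t y)) \<in> orbit_alg j l t"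
| zero: "(\<lambda>k. ze j) \<in> orbit_alg j l t"
| add: "f \<in> orbit_alg j l t \<Longrightarrow> g \<in> orbit_alg j l t \<Longrightarrow> (\<lambda>k. ad j (f k) (g k)) \<in> orbit_alg j l t"
| neg: "f \<in> orbit_alg j l t \<Longrightarrow> (\<lambda>k. ng j (f k)) \<in> orbit_alg j l t"
| mul: "f \<in> orbit_alg j l t \<Longrightarrow> g \<in> orbit_alg j l t \<Longrightarrow> (\<lambda>k. mu j (f k) (g 1)) \<in> orbit_alg j l t"
| rescale: "f \<in> orbit_alg j l t \<Longrightarrow> (\<lambda>k. f (k * c)) \<in> orbit_alg j l t"

context
  fixes j l t
  assumes g: "good (j, l, t)"
begin

lemma level_rng_good: "is_rng (PRg R j)"
  using goodD[OF g] level_rng by auto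

lemma orbit_mem: "y \<in> Rc l \<Longrightarrow> act j k (tr t y) \<in> Rc j"
  using goodD[OF g] act_mem tr_mem by blast

lemma orbit_alg_mem: "f \<in> orbit_alg j l t \<Longrightarrow> f k \<in> Rc j"
  by (induction arbitrary: k rule: orbit_alg.induct)
     (auto simp: orbit_mem rng_zero[OF level_rng_good] rng_addc[OF level_rng_good]
        rng_negc[OF level_rng_good] rng_mulc[OF level_rng_good])

lemma orbit_alg_scalar_add: "f \<in> orbit_alg j l t \<Longrightarrow> f (k + k') = ad j (f k) (f k')"
proof (induction arbitrary: k k' rule: orbit_alg.induct)
  case (orbit y)
  then show ?case using g unfolding good_iff act_scalar_additive_def by auto
next
  case zero
  then show ?case using rng_add0l[OF level_rng_good rng_zero[OF level_rng_good]] by simp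
next
  case (add f g)
  then show ?case using rng_add_swap_middle[OF level_rng_good] orbit_alg_mem by simp
next
  case (neg f)
  then show ?case using rng_neg_add[OF level_rng_good] orbit_alg_mem by simp
next
  case (mul f g)
  then show ?case using rng_distr[OF level_rng_good] orbit_alg_mem by simp
next
  case (rescale f c)
  then show ?case by (simp add: distrib_right)
qed

lemma orbit_alg_balanced_right:
  assumes f_mem: "\<forall>k. f k \<in> Rc j"
    and f_orbit: "\<forall>y\<in>Rc l. \<forall>k c. mu j (f (k * c)) (act j 1 (tr t y)) = mu j (f k) (act j c (tr t y))"
    and h: "h \<in> orbit_alg j l t"
  shows "mu j (f (k * c)) (h 1) = mu j (f k) (h c)"
  using h
proof (induction arbitrary: k c rule: orbit_alg.induct)
  case (orbit y)
  then show ?case using f_orbit by auto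
next
  case zero
  then show ?case using rng_mul0r[OF level_rng_good] f_mem by simp
next
  case (add g1 g2)
  then show ?case using rng_distl[OF level_rng_good] f_mem orbit_alg_mem by simp
next
  case (neg g1)
  then show ?case using rng_neg_mul_right[OF level_rng_good] f_mem orbit_alg_mem by simp
next
  case (mul g1 g2)
  have "mu j (f (k * c)) (mu j (g1 1) (g2 1)) = mu j (mu j (f (k * c)) (g1 1)) (g2 1)"
    using rng_mul_assoc[OF level_rng_good] f_mem orbit_alg_mem mul.hyps by simp
  also have "\<dots> = mu j (mu j (f k) (g1 c)) (g2 1)" using mul.IH by simp
  also have "\<dots> = mu j (f k) (mu j (g1 c) (g2 1))"
    using rng_mul_assoc[OF level_rng_good] f_mem orbit_alg_mem mul.hyps by simp
  finally show ?case .
next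
  case (rescale g1 c')
  have "mu j (f (k * c)) (g1 (1 * c')) = mu j (f (k * c * c')) (g1 1)" using rescale.IH[of "k * c" c'] by simp
  also have "\<dots> = mu j (f k) (g1 (c * c'))" using rescale.IH[of k "c * c'"] by (simp add: mult.assoc)
  finally show ?case by simp
qed

text \<open>\<open>K\<close>-bilinearity of the product.\<close>
lemma orbit_alg_balanced:
  "f \<in> orbit_alg j l t \<Longrightarrow> h \<in> orbit_alg j l t \<Longrightarrow> mu j (f (k * c)) (h 1) = mu j (f k) (h c)"
proof (induction arbitrary: h k c rule: orbit_alg.induct)
  case (orbit y)
  show ?case
  proof (rule orbit_alg_balanced_right[OF _ _ orbit.prems])
    show "\<forall>k. act j k (tr t y) \<in> Rc j" using orbit_mem orbit by auto
    show "\<forall>y'\<in>Rc l. \<forall>k c. mu j (act j (k * c) (tr t y)) (act j 1 (tr t y')) = mu j (act j k (tr t y)) (act j c (tr t y'))"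
      using g orbit unfolding good_iff act_multiplicative_def by auto
  qed
next
  case zero
  then show ?case using rng_mul0l[OF level_rng_good] orbit_alg_mem by simp
next
  case (add f1 f2)
  then show ?case using rng_distr[OF level_rng_good] orbit_alg_mem by simp
next
  case (neg f1)
  then show ?case using rng_neg_mul_left[OF level_rng_good] orbit_alg_mem by simp
next
  case (mul f1 f2)
  have f2h: "(\<lambda>k. mu j (f2 k) (h 1)) \<in> orbit_alg j l t" using orbit_alg.mul[OF mul.hyps(2) mul.prems] .
  have "mu j (mu j (f1 (k * c)) (f2 1)) (h 1) = mu j (f1 (k * c)) (mu j (f2 1) (h 1))"
    using rng_mul_assoc[OF level_rng_good] orbit_alg_mem mul.hyps mul.prems by simp
  also have "\<dots> = mu j (f1 k) (mu j (f2 c) (h 1))" using mul.IH(1)[OF f2h, of k c] by simp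
  also have "mu j (f2 c) (h 1) = mu j (f2 1) (h c)" using mul.IH(2)[OF mul.prems, of 1 c] by simp
  also have "mu j (f1 k) (mu j (f2 1) (h c)) = mu j (mu j (f1 k) (f2 1)) (h c)"
    using rng_mul_assoc[OF level_rng_good] orbit_alg_mem mul.hyps mul.prems by simp
  finally show ?case .
next
  case (rescale f1 c')
  show ?case using rescale.IH[OF rescale.prems, of "k * c'" c] by (simp add: ac_simps)
qed

end

lemma orbit_alg_tr:
  assumes m: "good_mor (j1, l1, t1) (j2, l2, t2) p q" and f: "f \<in> orbit_alg j2 l2 t2"
  shows "(\<lambda>k. tr p (f k)) \<in> orbit_alg j1 l1 t1"
proof -
  have h: "p \<in> hom I j1 j2" "q \<in> hom I l1 l2" "good (j1, l1, t1)" "good (j2, l2, t2)"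
    and c: "\<forall>k. \<forall>y\<in>Rc l2. tr p (act j2 k (tr t2 y)) = act j1 k (tr t1 (tr q y))"
    using m unfolding good_mor_iff by auto
  have R1: "is_rng (PRg R j1)" and R2: "is_rng (PRg R j2)" using level_rng_good h by auto
  have tm: "\<forall>x\<in>Rc j2. tr p x \<in> Rc j1"
    and ta: "\<forall>x\<in>Rc j2. \<forall>y\<in>Rc j2. tr p (ad j2 x y) = ad j1 (tr p x) (tr p y)"
    and tmu: "\<forall>x\<in>Rc j2. \<forall>y\<in>Rc j2. tr p (mu j2 x y) = mu j1 (tr p x) (tr p y)"
    using tr_rng_hom[OF h(1)] unfolding rng_hom_def by auto
  show ?thesis using f
  proof (induction rule: orbit_alg.induct)
    case (orbit y)
    then show ?case using c orbit_alg.orbit[of "tr q y" l1 j1 t1] tr_mem[OF h(2)] by simp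
  next
    case zero
    then show ?case using additive_map_zero[OF R2 R1 tm ta] orbit_alg.zero by simp
  next
    case (add f g)
    then show ?case using ta orbit_alg_mem[OF h(4)] orbit_alg.add[OF add.IH] by simp
  next
    case (neg f)
    then show ?case using additive_map_neg[OF R2 R1 tm ta] orbit_alg_mem[OF h(4)] orbit_alg.neg[OF neg.IH] by simp
  next
    case (mul f g)
    then show ?case using tmu orbit_alg_mem[OF h(4)] orbit_alg.mul[OF mul.IH] by simp
  next
    case (rescale f c)
    then show ?case using orbit_alg.rescale by blast
  qed
qed

lemma act_compose_germ:
  assumes j: "j \<in> Ob I" and t: "t \<in> hom I (aix j) l"
  shows "\<exists>m u u'. u \<in> hom I (aix l) m \<and> u' \<in> hom I l m \<and>
    (\<forall>z\<in>Rc m. \<forall>k c. act j k (tr t (act l c (tr u z))) = act j (k * c) (tr t (tr u' z)))"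
proof -
  obtain n1 u1 u1' where g1: "u1 \<in> hom I (aix l) n1" "u1' \<in> hom I (aix (aix j)) n1"
    "\<forall>x\<in>Rc n1. \<forall>k. tr t (act l k (tr u1 x)) = act (aix j) k (tr u1' x)" using naturality_germ[OF t] by blast
  obtain n2 u2 u2' where g2: "u2 \<in> hom I (aix j) n2" "u2' \<in> hom I (aix (aix j)) n2"
    "\<forall>x\<in>Rc n2. \<forall>k c. act j (k * c) (tr u2 x) = act j k (act (aix j) c (tr u2' x))" using mult_germ[OF j] by blast
  have l: "l \<in> Ob I" using hom_ob_cod[OF t] .
  have obs: "set [aix j, aix (aix j), l, aix l, n1, n2] \<subseteq> Ob I"
    using aix_ob[OF j] aix_ob[OF aix_ob[OF j]] l aix_ob[OF l] hom_ob_cod[OF g1(1)] hom_ob_cod[OF g2(1)] by auto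
  let ?E = "[(aix j, l, t), (aix l, n1, u1), (aix (aix j), n1, u1'), (aix j, n2, u2), (aix (aix j), n2, u2')]"
  obtain L c where L: "\<forall>x\<in>set [aix j, aix (aix j), l, aix l, n1, n2]. c x \<in> hom I x L"
     "\<forall>(x, y, f)\<in>set ?E. Cmp I (c y) f = c x \<and> (\<forall>z\<in>Rc L. tr f (tr (c y) z) = tr (c x) z)"
    using finite_cocone_tr[OF obs, of ?E] g1 g2 t by auto
  have c: "c l \<in> hom I l L" "c (aix l) \<in> hom I (aix l) L" "c n1 \<in> hom I n1 L" "c n2 \<in> hom I n2 L"
    using L(1) by auto
  have "act j k (tr t (act l k' (tr (c (aix l)) z))) = act j (k * k') (tr t (tr (c l) z))"
    if z: "z \<in> Rc L" for z k k'
  proof -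
    have E: "tr t (tr (c l) z) = tr (c (aix j)) z" "tr u1 (tr (c n1) z) = tr (c (aix l)) z"
      "tr u1' (tr (c n1) z) = tr (c (aix (aix j))) z" "tr u2 (tr (c n2) z) = tr (c (aix j)) z"
      "tr u2' (tr (c n2) z) = tr (c (aix (aix j))) z"
      using L(2) z by auto
    have "tr t (act l k' (tr (c (aix l)) z)) = act (aix j) k' (tr (c (aix (aix j))) z)"
      using g1(3)[rule_format, OF tr_mem[OF c(3) z], of k'] E by simp
    moreover have "act j k (act (aix j) k' (tr (c (aix (aix j))) z)) = act j (k * k') (tr (c (aix j)) z)"
      using g2(3)[rule_format, OF tr_mem[OF c(4) z], of k k'] E by simp
    ultimately show ?thesis using E by simp
  qed
  then show ?thesis using c by blast
qed

lemma orbit_alg_act_eq_tr: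
  assumes gs: "good (j, l, t)" and g: "good (l, L, T)"
    and s: "\<forall>y\<in>Rc l. act j 1 (tr t y) = tr s y" "s \<in> hom I j l"
    and twice: "\<forall>z\<in>Rc L. \<forall>k c. act j k (tr t (act l c (tr T z))) = act j (k * c) (tr t (tr q z))"
    and f: "f \<in> orbit_alg l L T"
  shows "act j k (tr t (f c)) = tr s (f (k * c))"
  using f
proof (induction arbitrary: k c rule: orbit_alg.induct)
  have Rl: "is_rng (PRg R l)" and Rj: "is_rng (PRg R j)" using level_rng goodD[OF g] goodD[OF gs] by auto
  have t_add: "\<forall>x\<in>Rc l. \<forall>y\<in>Rc l. \<forall>k. act j k (tr t (ad l x y)) = ad j (act j k (tr t x)) (act j k (tr t y))"
    and t_mult: "\<forall>x\<in>Rc l. \<forall>y\<in>Rc l. \<forall>k c. mu j (act j k (tr t x)) (act j c (tr t y)) = act j (k * c) (tr t (mu l x y))"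
    and t_mem: "\<forall>x\<in>Rc l. \<forall>k. act j k (tr t x) \<in> Rc j"
    using gs orbit_mem[OF gs] unfolding good_iff act_additive_def act_multiplicative_def by auto
  have tm: "\<forall>x\<in>Rc l. tr s x \<in> Rc j" and ta: "\<forall>x\<in>Rc l. \<forall>y\<in>Rc l. tr s (ad l x y) = ad j (tr s x) (tr s y)"
    and tmu: "\<forall>x\<in>Rc l. \<forall>y\<in>Rc l. tr s (mu l x y) = mu j (tr s x) (tr s y)"
    using tr_rng_hom[OF s(2)] unfolding rng_hom_def by auto
  have addk: "\<forall>x\<in>Rc l. \<forall>y\<in>Rc l. act j k (tr t (ad l x y)) = ad j (act j k (tr t x)) (act j k (tr t y))" for k
    using t_add by blast
  {
    case (orbit y)
    have "act l (k * c) (tr T y) \<in> Rc l" using orbit_mem[OF g orbit] .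
    then show ?case using twice orbit s(1) by (metis mult_1)
  next
    case zero
    show ?case
      using additive_map_zero[OF Rl Rj _ addk] additive_map_zero[OF Rl Rj tm ta] t_mem by simp
  next
    case (add f1 f2)
    then show ?case using t_add ta orbit_alg_mem[OF g] by simp
  next
    case (neg f1)
    then show ?case
      using additive_map_neg[OF Rl Rj _ addk] additive_map_neg[OF Rl Rj tm ta] t_mem orbit_alg_mem[OF g] by simp
  next
    case (mul f1 f2)
    have "act j k (tr t (mu l (f1 c) (f2 1))) = mu j (act j k (tr t (f1 c))) (act j 1 (tr t (f2 1)))"
      using t_mult orbit_alg_mem[OF g] mul.hyps by simp
    also have "\<dots> = mu j (tr s (f1 (k * c))) (tr s (f2 1))" using mul.IH[of k c] mul.IH(2)[of 1 1] by simp
    also have "\<dots> = tr s (mu l (f1 (k * c)) (f2 1))" using tmu orbit_alg_mem[OF g] mul.hyps by simp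
    finally show ?case .
  next
    case (rescale f1 c1)
    then show ?case by (simp add: ac_simps)
  }
qed

lemma eval_orbit_comparison:
  assumes gs: "good (j, l, t)" and gg: "good (l, l', t')"
  shows "\<exists>L qa qb s. good_mor (l, l', t') (l, L, Cmp I qa t') (Idn I l) qa \<and>
    good_mor (j, l, t) (l, L, Cmp I qa t') s qb \<and>
    (\<forall>f\<in>orbit_alg l L (Cmp I qa t'). \<forall>k. act j k (tr t (f 1)) = tr s (f k))"
proof -
  have j: "j \<in> Ob I" and t: "t \<in> hom I (aix j) l" and l: "l \<in> Ob I" and t': "t' \<in> hom I (aix l) l'"
    using goodD[OF gs] goodD[OF gg] by auto
  obtain m u u' where M: "u \<in> hom I (aix l) m" "u' \<in> hom I l m"
    "\<forall>z\<in>Rc m. \<forall>k c. act j k (tr t (act l c (tr u z))) = act j (k * c) (tr t (tr u' z))"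
    using act_compose_germ[OF j t] by blast
  obtain s where s: "s \<in> hom I j l" "\<forall>y\<in>Rc l. act j 1 (tr t y) = tr s y"
    using gs unfolding good_iff act_unital_def by blast
  have obs: "set [aix l, l', m, l] \<subseteq> Ob I" using aix_ob[OF l] l hom_ob_cod[OF t'] hom_ob_cod[OF M(1)] by auto
  obtain L c where L: "\<forall>x\<in>set [aix l, l', m, l]. c x \<in> hom I x L"
     "\<forall>(x, y, f)\<in>set [(aix l, l', t'), (aix l, m, u), (l, m, u')].
        Cmp I (c y) f = c x \<and> (\<forall>z\<in>Rc L. tr f (tr (c y) z) = tr (c x) z)"
    using finite_cocone_tr[OF obs, of "[(aix l, l', t'), (aix l, m, u), (l, m, u')]"] M t' by auto
  have c: "c l \<in> hom I l L" "c l' \<in> hom I l' L" "c m \<in> hom I m L" using L(1) by auto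
  define T where "T = Cmp I (c l') t'"
  have T: "T \<in> hom I (aix l) L" unfolding T_def using cmp_hom[OF t' c(2)] .
  have twice: "\<forall>z\<in>Rc L. \<forall>k c'. act j k (tr t (act l c' (tr T z))) = act j (k * c') (tr t (tr (c l) z))"
  proof (intro ballI allI)
    fix z k c' assume z: "z \<in> Rc L"
    have "tr T z = tr u (tr (c m) z)" "tr (c l) z = tr u' (tr (c m) z)"
      using L(2) tr_cmp[OF t' c(2) z] z unfolding T_def by auto
    then show "act j k (tr t (act l c' (tr T z))) = act j (k * c') (tr t (tr (c l) z))"
      using M(3) tr_mem[OF c(3) z] by simp
  qed
  have gT: "good (l, L, T)" unfolding T_def using good_refinement[OF gg c(2)] .
  have "good_mor (j, l, t) (l, L, T) s (c l)" unfolding good_mor_iff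
  proof (intro conjI gs gT s(1) c(1) allI ballI)
    fix k y assume y: "y \<in> Rc L"
    have "act l k (tr T y) \<in> Rc l" using act_mem[OF l tr_mem[OF T y]] .
    then show "tr s (act l k (tr T y)) = act j k (tr t (tr (c l) y))" using s(2) twice y by (metis mult_1)
  qed
  moreover have "good_mor (l, l', t') (l, L, T) (Idn I l) (c l')" unfolding T_def using good_mor_refinement[OF gg c(2)] .
  moreover have "\<forall>f\<in>orbit_alg l L T. \<forall>k. act j k (tr t (f 1)) = tr s (f k)"
    using orbit_alg_act_eq_tr[OF gs gT s(2,1) twice, of _ _ 1] by simp
  ultimately show ?thesis unfolding T_def by blast
qed

end

text \<open>The conclusion fixes all types of the pro-\<open>K\<close>-algebra to \<open>univ\<close>, so good triples, morphisms
  between them and functions \<open>K \<rightarrow> R\<^sub>j\<close> are encoded injectively into it.\<close>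
definition enc_ob :: "'o \<times> 'o \<times> 'm \<Rightarrow> ('o, 'm, 'k, 'r) univ" where
  "enc_ob \<sigma> = (case \<sigma> of (j, l, t) \<Rightarrow> {[Inl j, Inl l, Inr (Inl t)]})"

definition enc_ar :: "('o \<times> 'o \<times> 'm) \<times> ('o \<times> 'o \<times> 'm) \<times> 'm \<times> 'm \<Rightarrow> ('o, 'm, 'k, 'r) univ" where
  "enc_ar x = (case x of ((j1, l1, t1), (j2, l2, t2), p, q) \<Rightarrow>
     {[Inl j1, Inl l1, Inr (Inl t1), Inl j2, Inl l2, Inr (Inl t2), Inr (Inl p), Inr (Inl q)]})"

definition enc_fun :: "('k \<Rightarrow> 'r) \<Rightarrow> ('o, 'm, 'k, 'r) univ" where
  "enc_fun f = range (\<lambda>k. [Inr (Inr (Inl k)), Inr (Inr (Inr (f k)))])"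

lemma inj_enc_ob: "inj enc_ob"
proof (rule injI)
  fix x y :: "'o \<times> 'o \<times> 'm"
  assume "(enc_ob x :: ('o, 'm, 'k, 'r) univ) = enc_ob y"
  then show "x = y" unfolding enc_ob_def by (cases x; cases y) auto
qed

lemma inj_enc_ar: "inj enc_ar"
proof (rule injI)
  fix x y :: "('o \<times> 'o \<times> 'm) \<times> ('o \<times> 'o \<times> 'm) \<times> 'm \<times> 'm"
  assume e: "(enc_ar x :: ('o, 'm, 'k, 'r) univ) = enc_ar y"
  obtain a1 b1 c1 d1 e1 f1 g1 h1 where x: "x = ((a1, b1, c1), (d1, e1, f1), g1, h1)" by (metis prod.exhaust)
  obtain a2 b2 c2 d2 e2 f2 g2 h2 where y: "y = ((a2, b2, c2), (d2, e2, f2), g2, h2)" by (metis prod.exhaust)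
  from e show "x = y" unfolding enc_ar_def x y by simp
qed

lemma inj_enc_fun: "inj enc_fun"
proof (rule injI)
  fix f g :: "'k \<Rightarrow> 'r"
  assume e: "(enc_fun f :: ('o, 'm, 'k, 'r) univ) = enc_fun g"
  show "f = g"
  proof
    fix k
    have "[Inr (Inr (Inl k)), Inr (Inr (Inr (f k)))] \<in> (enc_fun f :: ('o, 'm, 'k, 'r) univ)"
      unfolding enc_fun_def by (rule rangeI)
    then have "[Inr (Inr (Inl k)), Inr (Inr (Inr (f k)))] \<in> (enc_fun g :: ('o, 'm, 'k, 'r) univ)"
      using e by simp
    then show "f k = g k" unfolding enc_fun_def by auto
  qed
qed

definition dec_ob :: "('o, 'm, 'k, 'r) univ \<Rightarrow> 'o \<times> 'o \<times> 'm" where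
  "dec_ob = inv enc_ob"

definition dec_ar :: "('o, 'm, 'k, 'r) univ \<Rightarrow> ('o \<times> 'o \<times> 'm) \<times> ('o \<times> 'o \<times> 'm) \<times> 'm \<times> 'm" where
  "dec_ar = inv enc_ar"

definition dec_fun :: "('o, 'm, 'k, 'r) univ \<Rightarrow> 'k \<Rightarrow> 'r" where
  "dec_fun = inv enc_fun"

lemma dec_ob_enc_ob [simp]: "dec_ob (enc_ob x) = x"
  unfolding dec_ob_def by (rule inv_f_f[OF inj_enc_ob])

lemma dec_ar_enc_ar [simp]: "dec_ar (enc_ar x) = x"
  unfolding dec_ar_def by (rule inv_f_f[OF inj_enc_ar])

lemma dec_fun_enc_fun [simp]: "dec_fun (enc_fun x) = x"
  unfolding dec_fun_def by (rule inv_f_f[OF inj_enc_fun])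

lemma enc_ob_eq_iff [simp]: "enc_ob x = enc_ob y \<longleftrightarrow> x = y"
  by (metis dec_ob_enc_ob)

lemma enc_ar_eq_iff [simp]: "enc_ar x = enc_ar y \<longleftrightarrow> x = y"
  by (metis dec_ar_enc_ar)

lemma enc_fun_eq_iff [simp]: "enc_fun x = enc_fun y \<longleftrightarrow> x = y"
  by (metis dec_fun_enc_fun)

context pro_ring_action
begin

definition good_cat :: "(('o, 'm, 'k, 'r) univ, ('o, 'm, 'k, 'r) univ) cat" where
  "good_cat = \<lparr> Ob = enc_ob ` {\<sigma>. good \<sigma>}, Ar = enc_ar ` {(\<sigma>, \<tau>, p, q). good_mor \<sigma> \<tau> p q},
     Dom = (\<lambda>x. enc_ob (fst (dec_ar x))), Cod = (\<lambda>x. enc_ob (fst (snd (dec_ar x)))),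
     Cmp = (\<lambda>y x. enc_ar (fst (dec_ar x), fst (snd (dec_ar y)),
       Cmp I (fst (snd (snd (dec_ar y)))) (fst (snd (snd (dec_ar x)))),
       Cmp I (snd (snd (snd (dec_ar y)))) (snd (snd (snd (dec_ar x)))))),
     Idn = (\<lambda>x. enc_ar (dec_ob x, dec_ob x, Idn I (fst (dec_ob x)), Idn I (fst (snd (dec_ob x))))) \<rparr>"

lemma good_cat_ob: "x \<in> Ob good_cat \<longleftrightarrow> (\<exists>j l t. x = enc_ob (j, l, t) \<and> good (j, l, t))"
  unfolding good_cat_def by auto

lemma good_cat_ar: "u \<in> Ar good_cat \<longleftrightarrow> (\<exists>\<sigma> \<tau> p q. u = enc_ar (\<sigma>, \<tau>, p, q) \<and> good_mor \<sigma> \<tau> p q)"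
  unfolding good_cat_def by auto

lemma good_cat_dom: "Dom good_cat (enc_ar (\<sigma>, \<tau>, p, q)) = enc_ob \<sigma>"
  and good_cat_cod: "Cod good_cat (enc_ar (\<sigma>, \<tau>, p, q)) = enc_ob \<tau>"
  unfolding good_cat_def by auto

lemma good_cat_hom: "x \<in> hom good_cat (enc_ob \<sigma>) (enc_ob \<tau>) \<longleftrightarrow> (\<exists>p q. x = enc_ar (\<sigma>, \<tau>, p, q) \<and> good_mor \<sigma> \<tau> p q)"
  unfolding hom_def good_cat_def by auto

lemma good_cat_cmp:
  "Cmp good_cat (enc_ar (\<sigma>2, \<sigma>3, p', q')) (enc_ar (\<sigma>1, \<sigma>2, p, q)) = enc_ar (\<sigma>1, \<sigma>3, Cmp I p' p, Cmp I q' q)"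
  unfolding good_cat_def by simp

lemma good_cat_idn: "Idn good_cat (enc_ob \<sigma>) = enc_ar (\<sigma>, \<sigma>, Idn I (fst \<sigma>), Idn I (fst (snd \<sigma>)))"
  unfolding good_cat_def by simp

lemma good_cat_obE:
  assumes "x \<in> Ob good_cat"
  obtains j l t where "x = enc_ob (j, l, t)" "good (j, l, t)"
  using assms unfolding good_cat_ob by blast

lemma good_cat_arE:
  assumes "u \<in> Ar good_cat"
  obtains j1 l1 t1 j2 l2 t2 p q where "u = enc_ar ((j1, l1, t1), (j2, l2, t2), p, q)"
    "good_mor (j1, l1, t1) (j2, l2, t2) p q"
  using assms unfolding good_cat_ar by (metis prod_cases3)

lemma category_good_cat: "category good_cat"
  unfolding category_def
proof (intro conjI)
  show "\<forall>u\<in>Ar good_cat. Dom good_cat u \<in> Ob good_cat \<and> Cod good_cat u \<in> Ob good_cat"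
    unfolding good_cat_def using good_mor_good by auto
  show "\<forall>x\<in>Ob good_cat. Idn good_cat x \<in> hom good_cat x x"
    unfolding good_cat_def hom_def using good_mor_idn by auto
  show "\<forall>f\<in>Ar good_cat. \<forall>g\<in>Ar good_cat. Cod good_cat f = Dom good_cat g \<longrightarrow>
      Cmp good_cat g f \<in> hom good_cat (Dom good_cat f) (Cod good_cat g)"
    unfolding good_cat_def hom_def using good_mor_cmp by auto
  show "\<forall>f\<in>Ar good_cat. Cmp good_cat (Idn good_cat (Cod good_cat f)) f = f \<and> Cmp good_cat f (Idn good_cat (Dom good_cat f)) = f"
    unfolding good_cat_def by (auto dest!: good_mor_homs simp: cmp_idl cmp_idr)
  show "\<forall>f\<in>Ar good_cat. \<forall>g\<in>Ar good_cat. \<forall>h\<in>Ar good_cat.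
      Cod good_cat f = Dom good_cat g \<and> Cod good_cat g = Dom good_cat h \<longrightarrow>
      Cmp good_cat h (Cmp good_cat g f) = Cmp good_cat (Cmp good_cat h g) f"
    unfolding good_cat_def by (auto dest!: good_mor_homs intro: cmp_assoc)
qed

lemma filtered_good_cat: "filtered good_cat"
  unfolding filtered_def
proof (intro conjI ballI allI impI category_good_cat)
  obtain j where "j \<in> Ob I" using ob_nonempty by auto
  then obtain l t where "good (j, l, t)" using good_exists by blast
  then show "Ob good_cat \<noteq> {}" unfolding good_cat_def by auto
next
  fix x y assume "x \<in> Ob good_cat" "y \<in> Ob good_cat"
  then obtain j1 l1 t1 j2 l2 t2 where xy: "x = enc_ob (j1, l1, t1)" "y = enc_ob (j2, l2, t2)"
    "good (j1, l1, t1)" "good (j2, l2, t2)"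
    unfolding good_cat_ob by auto
  then obtain j l t p1 q1 p2 q2 where "good_mor (j1, l1, t1) (j, l, t) p1 q1" "good_mor (j2, l2, t2) (j, l, t) p2 q2"
    using good_upper_bound by blast
  then show "\<exists>c u v. u \<in> hom good_cat x c \<and> v \<in> hom good_cat y c"
    unfolding xy by (intro exI[of _ "enc_ob (j, l, t)"] exI[of _ "enc_ar ((j1, l1, t1), (j, l, t), p1, q1)"]
       exI[of _ "enc_ar ((j2, l2, t2), (j, l, t), p2, q2)"]) (auto simp: good_cat_hom)
next
  fix x y u v assume "u \<in> hom good_cat x y \<and> v \<in> hom good_cat x y"
  then obtain j1 l1 t1 j2 l2 t2 p q p' q' where e: "x = enc_ob (j1, l1, t1)" "y = enc_ob (j2, l2, t2)"
    "u = enc_ar ((j1, l1, t1), (j2, l2, t2), p, q)" "v = enc_ar ((j1, l1, t1), (j2, l2, t2), p', q')"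
    "good_mor (j1, l1, t1) (j2, l2, t2) p q" "good_mor (j1, l1, t1) (j2, l2, t2) p' q'"
    unfolding hom_def good_cat_def by auto
  obtain j l t w e' where w: "good_mor (j2, l2, t2) (j, l, t) w e'" "Cmp I w p = Cmp I w p'" "Cmp I e' q = Cmp I e' q'"
    using good_coequalize[OF e(5,6)] by blast
  show "\<exists>c w. w \<in> hom good_cat y c \<and> Cmp good_cat w u = Cmp good_cat w v"
    by (rule exI[of _ "enc_ob (j, l, t)"], rule exI[of _ "enc_ar ((j2, l2, t2), (j, l, t), w, e')"])
       (use w in \<open>simp add: e good_cat_hom good_cat_cmp\<close>)
qed

definition orbit_prorng :: "(('o, 'm, 'k, 'r) univ, ('o, 'm, 'k, 'r) univ, ('o, 'm, 'k, 'r) univ) prorng" where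
  "orbit_prorng = \<lparr> PIx = good_cat,
     PRg = (\<lambda>x. case dec_ob x of (j, l, t) \<Rightarrow>
       \<lparr> rcar = enc_fun ` orbit_alg j l t,
         radd = (\<lambda>u v. enc_fun (\<lambda>k. ad j (dec_fun u k) (dec_fun v k))),
         rmul = (\<lambda>u v. enc_fun (\<lambda>k. mu j (dec_fun u k) (dec_fun v 1))),
         rzero = enc_fun (\<lambda>k. ze j),
         rneg = (\<lambda>u. enc_fun (\<lambda>k. ng j (dec_fun u k))) \<rparr>),
     PTr = (\<lambda>m u. enc_fun (\<lambda>k. tr (fst (snd (snd (dec_ar m)))) (dec_fun u k))) \<rparr>"

definition orbit_smul :: "('o, 'm, 'k, 'r) univ \<Rightarrow> 'k \<Rightarrow> ('o, 'm, 'k, 'r) univ \<Rightarrow> ('o, 'm, 'k, 'r) univ" where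
  "orbit_smul x c u = enc_fun (\<lambda>k. dec_fun u (k * c))"

lemma orbit_prorng_simps:
  "PIx orbit_prorng = good_cat"
  "rcar (PRg orbit_prorng (enc_ob (j, l, t))) = enc_fun ` orbit_alg j l t"
  "radd (PRg orbit_prorng (enc_ob (j, l, t))) u v = enc_fun (\<lambda>k. ad j (dec_fun u k) (dec_fun v k))"
  "rmul (PRg orbit_prorng (enc_ob (j, l, t))) u v = enc_fun (\<lambda>k. mu j (dec_fun u k) (dec_fun v 1))"
  "rzero (PRg orbit_prorng (enc_ob (j, l, t))) = enc_fun (\<lambda>k. ze j)"
  "rneg (PRg orbit_prorng (enc_ob (j, l, t))) u = enc_fun (\<lambda>k. ng j (dec_fun u k))"
  "PTr orbit_prorng (enc_ar (\<sigma>, \<tau>, p, q)) u = enc_fun (\<lambda>k. tr p (dec_fun u k))"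
  by (simp_all add: orbit_prorng_def)

lemma is_rng_orbit_level:
  assumes g: "good (j, l, t)"
  shows "is_rng (PRg orbit_prorng (enc_ob (j, l, t)))"
proof -
  note Rj = level_rng_good[OF g] and mem = orbit_alg_mem[OF g]
  show ?thesis unfolding is_rng_def orbit_prorng_simps
    by (intro conjI ballI; auto intro: orbit_alg.intros simp: fun_eq_iff)
       (auto simp: mem rng_add_assoc[OF Rj] rng_mul_assoc[OF Rj] rng_distl[OF Rj] rng_distr[OF Rj]
          rng_add_comm[OF Rj] rng_add0l[OF Rj] rng_negl[OF Rj])
qed

lemma is_kalg_orbit_level:
  assumes g: "good (j, l, t)"
  shows "is_kalg (PRg orbit_prorng (enc_ob (j, l, t))) (orbit_smul (enc_ob (j, l, t)))"
  unfolding is_kalg_def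
proof (intro conjI is_rng_orbit_level[OF g] allI ballI)
  fix k x assume "x \<in> rcar (PRg orbit_prorng (enc_ob (j, l, t)))"
  then show "orbit_smul (enc_ob (j, l, t)) k x \<in> rcar (PRg orbit_prorng (enc_ob (j, l, t)))"
    unfolding orbit_prorng_simps orbit_smul_def by (auto intro: orbit_alg.rescale)
next
  fix k k' x y
  assume "x \<in> rcar (PRg orbit_prorng (enc_ob (j, l, t)))" "y \<in> rcar (PRg orbit_prorng (enc_ob (j, l, t)))"
  then obtain f h where fh: "x = enc_fun f" "y = enc_fun h" "f \<in> orbit_alg j l t" "h \<in> orbit_alg j l t"
    unfolding orbit_prorng_simps by auto
  let ?A = "PRg orbit_prorng (enc_ob (j, l, t))" and ?sm = "orbit_smul (enc_ob (j, l, t))"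
  show "?sm k (radd ?A x y) = radd ?A (?sm k x) (?sm k y)"
    unfolding orbit_prorng_simps orbit_smul_def by simp
  show "?sm (k + k') x = radd ?A (?sm k x) (?sm k' x)"
    unfolding orbit_prorng_simps orbit_smul_def fh using orbit_alg_scalar_add[OF g fh(3)] by (simp add: distrib_left)
  show "?sm (k * k') x = ?sm k (?sm k' x)"
    unfolding orbit_prorng_simps orbit_smul_def fh by (simp add: mult.assoc)
  show "?sm 1 x = x"
    unfolding orbit_prorng_simps orbit_smul_def fh by simp
  show "?sm k (rmul ?A x y) = rmul ?A (?sm k x) y"
    unfolding orbit_prorng_simps orbit_smul_def fh by simp
  show "?sm k (rmul ?A x y) = rmul ?A x (?sm k y)"
    unfolding orbit_prorng_simps orbit_smul_def fh using orbit_alg_balanced[OF g fh(3,4)] by simp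
qed

lemma orbit_tr_rng_hom:
  assumes "u \<in> Ar good_cat"
  shows "rng_hom (PRg orbit_prorng (Cod good_cat u)) (PRg orbit_prorng (Dom good_cat u)) (PTr orbit_prorng u)"
proof -
  obtain j1 l1 t1 j2 l2 t2 p q where u: "u = enc_ar ((j1, l1, t1), (j2, l2, t2), p, q)"
    and m: "good_mor (j1, l1, t1) (j2, l2, t2) p q"
    using good_cat_arE[OF assms] .
  have p: "p \<in> hom I j1 j2" and g2: "good (j2, l2, t2)" using m unfolding good_mor_iff by auto
  show ?thesis
    unfolding rng_hom_def u good_cat_dom good_cat_cod orbit_prorng_simps
    using tr_rng_hom[OF p] orbit_alg_mem[OF g2] orbit_alg_tr[OF m] unfolding rng_hom_def by auto
qed

lemma orbit_tr_idn:
  assumes "x \<in> Ob good_cat" "y \<in> rcar (PRg orbit_prorng x)"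
  shows "PTr orbit_prorng (Idn good_cat x) y = y"
proof -
  obtain j l t where x: "x = enc_ob (j, l, t)" and g: "good (j, l, t)" using good_cat_obE[OF assms(1)] .
  obtain f where "y = enc_fun f" "f \<in> orbit_alg j l t" using assms(2) unfolding x orbit_prorng_simps by auto
  then show ?thesis
    unfolding x good_cat_idn orbit_prorng_simps using tr_idn goodD[OF g] orbit_alg_mem[OF g] by simp
qed

lemma orbit_tr_cmp:
  assumes f: "f \<in> Ar good_cat" and g: "g \<in> Ar good_cat" and fg: "Cod good_cat f = Dom good_cat g"
    and y: "y \<in> rcar (PRg orbit_prorng (Cod good_cat g))"
  shows "PTr orbit_prorng (Cmp good_cat g f) y = PTr orbit_prorng f (PTr orbit_prorng g y)"
proof -
  obtain \<sigma>1 \<sigma>2 p q where m1: "f = enc_ar (\<sigma>1, \<sigma>2, p, q)" "good_mor \<sigma>1 \<sigma>2 p q"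
    using f unfolding good_cat_ar by blast
  obtain \<sigma>2' j3 l3 t3 p' q' where m2: "g = enc_ar (\<sigma>2', (j3, l3, t3), p', q')" "good_mor \<sigma>2' (j3, l3, t3) p' q'"
    using g unfolding good_cat_ar by (metis prod_cases3)
  have e: "\<sigma>2' = \<sigma>2" using fg unfolding m1 m2 good_cat_dom good_cat_cod by simp
  obtain h where h: "y = enc_fun h" "h \<in> orbit_alg j3 l3 t3"
    using y unfolding m2 good_cat_cod orbit_prorng_simps by auto
  have p: "p \<in> hom I (fst \<sigma>1) (fst \<sigma>2)" "p' \<in> hom I (fst \<sigma>2) j3"
    using good_mor_homs m1(2) m2(2) e by fastforce+
  show ?thesis
    unfolding m1 m2 e good_cat_cmp orbit_prorng_simps h
    using tr_cmp[OF p] orbit_alg_mem[OF _ h(2)] good_mor_good[OF m2(2)] by simp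
qed

lemma is_prorng_orbit_prorng: "is_prorng orbit_prorng"
proof -
  have "PTr orbit_prorng u y \<in> rcar (PRg orbit_prorng (Dom good_cat u))"
    if "u \<in> Ar good_cat" "y \<in> rcar (PRg orbit_prorng (Cod good_cat u))" for u y
    using orbit_tr_rng_hom that unfolding rng_hom_def by blast
  moreover have "is_rng (PRg orbit_prorng x)" if "x \<in> Ob good_cat" for x
    using that is_rng_orbit_level by (auto elim: good_cat_obE)
  ultimately show ?thesis unfolding is_prorng_def proset_def und_def
    using filtered_good_cat orbit_tr_idn orbit_tr_cmp orbit_tr_rng_hom by (simp add: orbit_prorng_simps)
qed

lemma is_prokalg_orbit_prorng: "is_prokalg orbit_prorng orbit_smul"
  unfolding is_prokalg_def
proof (intro conjI is_prorng_orbit_prorng ballI allI)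
  fix x assume "x \<in> Ob (PIx orbit_prorng)"
  then show "is_kalg (PRg orbit_prorng x) (orbit_smul x)"
    using is_kalg_orbit_level unfolding orbit_prorng_simps by (auto elim: good_cat_obE)
next
  fix u k y assume "u \<in> Ar (PIx orbit_prorng)"
  then obtain \<sigma> \<tau> p q where "u = enc_ar (\<sigma>, \<tau>, p, q)" unfolding orbit_prorng_simps good_cat_ar by blast
  then show "PTr orbit_prorng u (orbit_smul (Cod (PIx orbit_prorng) u) k y) =
      orbit_smul (Dom (PIx orbit_prorng) u) k (PTr orbit_prorng u y)"
    by (simp add: orbit_prorng_simps orbit_smul_def)
qed

definition choose_good :: "'o \<Rightarrow> 'o \<times> 'o \<times> 'm" where
  "choose_good j = (SOME \<sigma>. good \<sigma> \<and> fst \<sigma> = j)"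

lemma choose_good:
  assumes "j \<in> Ob I"
  obtains l t where "choose_good j = (j, l, t)" "good (j, l, t)"
proof -
  obtain l t where "good (j, l, t)" using good_exists assms by blast
  then have "\<exists>\<sigma>. good \<sigma> \<and> fst \<sigma> = j" by auto
  then have "good (choose_good j) \<and> fst (choose_good j) = j" unfolding choose_good_def by (rule someI_ex)
  then show ?thesis using that by (metis prod.collapse)
qed

definition orbit_map :: "(('o, 'm, 'k, 'r) univ, 'o, 'r, ('o, 'm, 'k, 'r) univ) promap" where
  "orbit_map = (\<lambda>x. fst (snd (dec_ob x)), \<lambda>x y. case dec_ob x of (j, l, t) \<Rightarrow> enc_fun (\<lambda>k. act j k (tr t y)))"

definition eval_map :: "('o, ('o, 'm, 'k, 'r) univ, ('o, 'm, 'k, 'r) univ, 'r) promap" where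
  "eval_map = (\<lambda>j. enc_ob (choose_good j), \<lambda>j x. dec_fun x 1)"

lemma orbit_map_simps:
  "fst orbit_map (enc_ob (j, l, t)) = l"
  "snd orbit_map (enc_ob (j, l, t)) y = enc_fun (\<lambda>k. act j k (tr t y))"
  by (simp_all add: orbit_map_def)

lemma orbit_map_compatible:
  assumes "v \<in> Ar good_cat"
  shows "germ_eq (und R) (fst orbit_map (Cod good_cat v)) (\<lambda>y. PTr orbit_prorng v (snd orbit_map (Cod good_cat v) y))
      (fst orbit_map (Dom good_cat v)) (snd orbit_map (Dom good_cat v))"
proof -
  obtain j1 l1 t1 j2 l2 t2 p q where v: "v = enc_ar ((j1, l1, t1), (j2, l2, t2), p, q)"
    and m: "good_mor (j1, l1, t1) (j2, l2, t2) p q"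
    using good_cat_arE[OF assms] .
  then have q: "q \<in> hom I l1 l2" and l2: "l2 \<in> Ob I"
    and c: "\<forall>k. \<forall>y\<in>Rc l2. tr p (act j2 k (tr t2 y)) = act j1 k (tr t1 (tr q y))"
    unfolding good_mor_iff using goodD by auto
  show ?thesis unfolding germ_eq_def v good_cat_dom good_cat_cod orbit_map_simps orbit_prorng_simps und_simps
    using idn_hom[OF l2] q c tr_idn[OF l2] by (intro exI[of _ l2] exI[of _ "Idn I l2"] exI[of _ q]) simp
qed

lemma prorng_mor_orbit_map: "prorng_mor R orbit_prorng orbit_map"
  unfolding prorng_mor_def promor_def und_simps orbit_prorng_simps
proof (intro conjI ballI)
  fix x assume "x \<in> Ob good_cat"
  then obtain j l t where x: "x = enc_ob (j, l, t)" and g: "good (j, l, t)" by (rule good_cat_obE)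
  show "fst orbit_map x \<in> Ob I" using goodD[OF g] unfolding x orbit_map_simps by simp
  show "snd orbit_map x y \<in> rcar (PRg orbit_prorng x)" if "y \<in> Rc (fst orbit_map x)" for y
    using that unfolding x orbit_map_simps orbit_prorng_simps by (auto intro: orbit_alg.orbit)
  show "rng_hom (PRg R (fst orbit_map x)) (PRg orbit_prorng x) (snd orbit_map x)"
    using g orbit_alg.orbit[of _ l j t]
    unfolding rng_hom_def x orbit_map_simps orbit_prorng_simps good_iff act_additive_def act_multiplicative_def
    by auto
qed (rule orbit_map_compatible)

lemma eval_map_compatible:
  assumes "v \<in> Ar I"
  shows "germ_eq (und orbit_prorng) (fst eval_map (Cod I v)) (\<lambda>x. tr v (snd eval_map (Cod I v) x))
      (fst eval_map (Dom I v)) (snd eval_map (Dom I v))"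
proof -
  define j j' where "j = Dom I v" and "j' = Cod I v"
  have v: "v \<in> hom I j j'" using assms unfolding j_def j'_def hom_def by simp
  obtain l t where g: "choose_good j = (j, l, t)" "good (j, l, t)" using choose_good[OF hom_ob_dom[OF v]] .
  obtain l' t' where g': "choose_good j' = (j', l', t')" "good (j', l', t')" using choose_good[OF hom_ob_cod[OF v]] .
  obtain la ta qa where m1: "good_mor (j, l, t) (j', la, ta) v qa" using good_mor_extend[OF g(2) v] by blast
  have "good (j', la, ta)" using m1 unfolding good_mor_iff by auto
  then obtain L T r1 r2 where m2: "good_mor (j', la, ta) (j', L, T) (Idn I j') r1"
      "good_mor (j', l', t') (j', L, T) (Idn I j') r2"
    using good_mor_merge[OF _ g'(2)] by blast
  have m3: "good_mor (j, l, t) (j', L, T) v (Cmp I r1 qa)"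
    using good_mor_cmp[OF m1 m2(1)] cmp_idl[OF v] by simp
  have gT: "good (j', L, T)" and j': "j' \<in> Ob I" using m2 goodD unfolding good_mor_iff by auto
  show ?thesis unfolding germ_eq_def j_def[symmetric] j'_def[symmetric]
    by (rule exI[of _ "enc_ob (j', L, T)"], rule exI[of _ "enc_ar ((j', l', t'), (j', L, T), Idn I j', r2)"],
        rule exI[of _ "enc_ar ((j, l, t), (j', L, T), v, Cmp I r1 qa)"])
       (use m2(2) m3 g g' orbit_alg_mem[OF gT] tr_idn[OF j'] in
        \<open>auto simp: und_simps eval_map_def orbit_prorng_simps good_cat_hom\<close>)
qed

lemma prorng_mor_eval_map: "prorng_mor orbit_prorng R eval_map"
  unfolding prorng_mor_def promor_def und_simps
proof (intro conjI ballI)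
  fix j assume "j \<in> Ob I"
  then obtain l t where g: "choose_good j = (j, l, t)" "good (j, l, t)" by (rule choose_good)
  show "fst eval_map j \<in> Ob (PIx orbit_prorng)"
    using g unfolding eval_map_def orbit_prorng_simps good_cat_ob by auto
  show "snd eval_map j x \<in> Rc j" if "x \<in> rcar (PRg orbit_prorng (fst eval_map j))" for x
    using that orbit_alg_mem[OF g(2)] by (auto simp: eval_map_def g(1) orbit_prorng_simps)
  show "rng_hom (PRg orbit_prorng (fst eval_map j)) (PRg R j) (snd eval_map j)"
    using orbit_alg_mem[OF g(2)] by (auto simp: rng_hom_def eval_map_def g(1) orbit_prorng_simps)
qed (rule eval_map_compatible)

lemma eval_map_orbit_map: "promor_eq (und R) (und R) (pcomp eval_map orbit_map) pid"
  unfolding promor_eq_def und_simps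
proof
  fix j assume j: "j \<in> Ob I"
  obtain l t where g: "choose_good j = (j, l, t)" "good (j, l, t)" using choose_good[OF j] .
  obtain s where s: "s \<in> hom I j l" "\<forall>y\<in>Rc l. act j 1 (tr t y) = tr s y"
    using g(2) unfolding good_iff act_unital_def by blast
  have l: "l \<in> Ob I" using goodD[OF g(2)] by simp
  show "germ_eq (und R) (fst (pcomp eval_map orbit_map) j) (snd (pcomp eval_map orbit_map) j) (fst pid j) (snd pid j)"
    unfolding germ_eq_def
    using idn_hom[OF l] s tr_idn[OF l]
    by (intro exI[of _ l] exI[of _ "Idn I l"] exI[of _ s]) (simp add: pcomp_def pid_def eval_map_def g(1) und_simps orbit_map_simps)
qed

lemma orbit_map_eval_map: "promor_eq (und orbit_prorng) (und orbit_prorng) (pcomp orbit_map eval_map) pid"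
  unfolding promor_eq_def und_simps orbit_prorng_simps
proof
  fix x assume "x \<in> Ob good_cat"
  then obtain j l t where x: "x = enc_ob (j, l, t)" and g: "good (j, l, t)" by (rule good_cat_obE)
  obtain l' t' where g': "choose_good l = (l, l', t')" "good (l, l', t')" using choose_good goodD[OF g] by blast
  obtain L qa qb s where F: "good_mor (l, l', t') (l, L, Cmp I qa t') (Idn I l) qa"
      "good_mor (j, l, t) (l, L, Cmp I qa t') s qb"
      "\<forall>f\<in>orbit_alg l L (Cmp I qa t'). \<forall>k. act j k (tr t (f 1)) = tr s (f k)"
    using eval_orbit_comparison[OF g g'(2)] by blast
  have l: "l \<in> Ob I" using goodD[OF g] by simp
  have "tr (Idn I l) (f 1) = f 1" if "f \<in> orbit_alg l L (Cmp I qa t')" for f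
    using tr_idn[OF l] orbit_alg_mem[OF good_mor_good[THEN conjunct2, OF F(1)] that] by simp
  then show "germ_eq (und orbit_prorng) (fst (pcomp orbit_map eval_map) x) (snd (pcomp orbit_map eval_map) x)
      (fst pid x) (snd pid x)"
    unfolding germ_eq_def
    by (intro exI[of _ "enc_ob (l, L, Cmp I qa t')"] exI[of _ "enc_ar ((l, l', t'), (l, L, Cmp I qa t'), Idn I l, qa)"]
        exI[of _ "enc_ar ((j, l, t), (l, L, Cmp I qa t'), s, qb)"])
       (use F in \<open>auto simp: pcomp_def pid_def eval_map_def g'(1) orbit_map_simps und_simps x good_cat_hom orbit_prorng_simps\<close>)
qed

lemma orbit_map_action:
  "promor_eq (cprod (UNIV :: 'k set) (und R)) (und orbit_prorng)
     (pcomp orbit_map A) (pcomp (lw (\<lambda>j (k, s). orbit_smul j k s)) (ctimes orbit_map))"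
  unfolding promor_eq_def und_simps orbit_prorng_simps
proof
  fix x assume "x \<in> Ob good_cat"
  then obtain j l t where x: "x = enc_ob (j, l, t)" and g: "good (j, l, t)" by (rule good_cat_obE)
  obtain m u u' where M: "u \<in> hom I (aix l) m" "u' \<in> hom I l m"
    "\<forall>z\<in>Rc m. \<forall>k c. act j k (tr t (act l c (tr u z))) = act j (k * c) (tr t (tr u' z))"
    using act_compose_germ goodD[OF g] by blast
  show "germ_eq (cprod UNIV (und R)) (fst (pcomp orbit_map A) x) (snd (pcomp orbit_map A) x)
      (fst (pcomp (lw (\<lambda>j (k, s). orbit_smul j k s)) (ctimes orbit_map)) x)
      (snd (pcomp (lw (\<lambda>j (k, s). orbit_smul j k s)) (ctimes orbit_map)) x)"
    unfolding germ_eq_def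
    using M by (intro exI[of _ m] exI[of _ u] exI[of _ u'])
      (auto simp: pcomp_def lw_def ctimes_def cprod_def orbit_map_simps und_simps x orbit_smul_def hom_def)
qed

end

theorem mainTheorem9:
  fixes R :: "('o, 'm, 'r) prorng"
    and A :: "('o, 'o, 'k::comm_ring_1 \<times> 'r, 'r) promap"
  assumes R: "is_prorng R"
    and act: "promor (cprod (UNIV :: 'k set) (und R)) (und R) A"
    and mult_assoc:
      "promor_eq (cprod (UNIV :: ('k \<times> 'k) set) (und R)) (und R)
         (pcomp A (lw (\<lambda>j ((k, k'), a). (k * k', a))))
         (pcomp A (pcomp (ctimes A) (lw (\<lambda>j ((k, k'), a). (k, (k', a))))))"
    and unit:
      "promor_eq (und R) (und R) (pcomp A (lw (\<lambda>j a. (1, a)))) pid"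
    and add_right:
      "promor_eq (cprod (UNIV :: 'k set) (pprod (und R) (und R))) (und R)
         (pcomp A (ctimes (padd R)))
         (pcomp (padd R) (pcomp (ptimes A A) (lw (\<lambda>j (k, (a, b)). ((k, a), (k, b))))))"
    and add_left:
      "promor_eq (cprod (UNIV :: ('k \<times> 'k) set) (und R)) (und R)
         (pcomp A (lw (\<lambda>j ((k, k'), a). (k + k', a))))
         (pcomp (padd R) (pcomp (ptimes A A)
            (pcomp (lw (\<lambda>j ((k, k'), (a, b)). ((k, a), (k', b)))) (ctimes (diag (und R))))))"
    and mul_left:
      "promor_eq (cprod (UNIV :: 'k set) (pprod (und R) (und R))) (und R)
         (pcomp A (ctimes (pmul R)))
         (pcomp (pmul R) (pcomp (ptimes A pid) (lw (\<lambda>j (k, (a, b)). ((k, a), b)))))"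
    and mul_right:
      "promor_eq (cprod (UNIV :: 'k set) (pprod (und R) (und R))) (und R)
         (pcomp A (ctimes (pmul R)))
         (pcomp (pmul R) (pcomp (ptimes pid A) (lw (\<lambda>j (k, (a, b)). (a, (k, b))))))"
  shows "\<exists>(S :: (('o, 'm, 'k, 'r) univ, ('o, 'm, 'k, 'r) univ, ('o, 'm, 'k, 'r) univ) prorng)
            (sm :: ('o, 'm, 'k, 'r) univ \<Rightarrow> 'k \<Rightarrow> ('o, 'm, 'k, 'r) univ \<Rightarrow> ('o, 'm, 'k, 'r) univ)
            F G.
           is_prokalg S sm \<and>
           prorng_mor R S F \<and> prorng_mor S R G \<and>
           promor_eq (und R) (und R) (pcomp G F) pid \<and>
           promor_eq (und S) (und S) (pcomp F G) pid \<and>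
           promor_eq (cprod (UNIV :: 'k set) (und R)) (und S)
             (pcomp F A) (pcomp (lw (\<lambda>j (k, s). sm j k s)) (ctimes F))"
proof -
  interpret pro_ring_action R A
    using assms by unfold_locales
  show ?thesis
    using is_prokalg_orbit_prorng prorng_mor_orbit_map prorng_mor_eval_map
      eval_map_orbit_map orbit_map_eval_map orbit_map_action by blast
qed

end
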